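(* Let $m\ge2$, $R>0$, $B=B(R)\subset\mathbb{R}^m$ the ball of radius $R$ centered at the origin, and $h\in C^2([0,\infty))$ with $h'(r)\ge0$ and $h''(r)\ge0$ on $(0,\infty)$. Assume $\alpha\in[-\sigma_1(B;\gamma_h),0]$. Let $g:[0,R]\to[0,\infty)$, not identically zero, solve $$g''+\Big(\frac{m-1}{r}+h'(r)\Big)g'+\Big(\lambda_{2,\alpha}(B;\gamma_h)-\frac{m-1}{r^2}\Big)g=0\ \text{ on }(0,R),\quad g(0)=0,\ g'(R)=-\alpha g(R),$$ and extend $g$ by $g(r)=g(R)e^{-\alpha(r-R)}$ for $r\ge R$. Define $$F(r)=g'(r)^2+\frac{m-1}{r^2}g(r)^2+2\alpha g(r)g'(r)+\alpha\Big(\frac{m-1}{r}+h'(r)\Big)g(r)^2 .$$ Then $F$ is monotonically decreasing on $(0,\infty)$.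
   Context: $d\gamma_h=e^{h(|x|)}dx$. $\lambda_{2,\alpha}(B;\gamma_h)$ is the second eigenvalue (with multiplicity) of the Robin problem $-\operatorname{div}(e^{h(|x|)}\nabla u)=\lambda e^{h(|x|)}u$ in $B$, $\partial u/\partial\nu+\alpha u=0$ on $\partial B$, given variationally by $\inf\{\frac{\int_B|\nabla u|^2d\gamma_h+\alpha\int_{\partial B}u^2e^{h}dA}{\int_Bu^2d\gamma_h}: u\ne0,\ \int_B uu_1d\gamma_h=0\}$, $u_1$ a first eigenfunction. $\sigma_1(B;\gamma_h)=\inf\{\frac{\int_B|\nabla u|^2d\gamma_h}{\int_{\partial B}u^2e^hdA}: u\ne0,\ \int_{\partial B}ue^hdA=0\}$ is the first nonzero weighted Steklov eigenvalue. *)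

theory Defs
  imports "HOL-Analysis.Analysis"
begin

definition C1_cball :: "real \<Rightarrow> ('a::euclidean_space \<Rightarrow> real) \<Rightarrow> bool" where
  "C1_cball R u \<longleftrightarrow> (\<exists>S. open S \<and> cball 0 R \<subseteq> S \<and> (\<forall>x\<in>S. u differentiable (at x)) \<and>
      (\<forall>b\<in>Basis. continuous_on S (\<lambda>x. frechet_derivative u (at x) b)))"

definition grad_sq :: "('a::euclidean_space \<Rightarrow> real) \<Rightarrow> 'a \<Rightarrow> real" where
  "grad_sq u x = (\<Sum>b\<in>Basis. (frechet_derivative u (at x) b)^2)"

text \<open>Integral over the sphere of radius R with respect to surface measure dA, expressed through
  the cone formula: the surface integral over the sphere of radius R equals
  DIM * R^(DIM-1) * integral over the unit ball of f(R x/|x|).\<close>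
definition sphere_integral :: "real \<Rightarrow> ('a::euclidean_space \<Rightarrow> real) \<Rightarrow> real" where
  "sphere_integral R f = real DIM('a) * R ^ (DIM('a) - 1) *
      integral (ball (0::'a) 1) (\<lambda>x. f ((R / norm x) *\<^sub>R x))"

definition robin_num :: "(real \<Rightarrow> real) \<Rightarrow> real \<Rightarrow> real \<Rightarrow> ('a::euclidean_space \<Rightarrow> real) \<Rightarrow> real" where
  "robin_num h R \<alpha> u = integral (ball 0 R) (\<lambda>x. grad_sq u x * exp (h (norm x)))
      + \<alpha> * sphere_integral R (\<lambda>x. (u x)^2 * exp (h (norm x)))"

definition wL2 :: "(real \<Rightarrow> real) \<Rightarrow> real \<Rightarrow> ('a::euclidean_space \<Rightarrow> real) \<Rightarrow> ('a \<Rightarrow> real) \<Rightarrow> real" where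
  "wL2 h R u v = integral (ball 0 R) (\<lambda>x. u x * v x * exp (h (norm x)))"

definition robin_lambda1 :: "(real \<Rightarrow> real) \<Rightarrow> real \<Rightarrow> real \<Rightarrow> 'a::euclidean_space itself \<Rightarrow> real" where
  "robin_lambda1 h R \<alpha> _ = Inf {robin_num h R \<alpha> u / wL2 h R u u | u :: 'a \<Rightarrow> real.
      C1_cball R u \<and> wL2 h R u u > 0}"

definition robin_u1 :: "(real \<Rightarrow> real) \<Rightarrow> real \<Rightarrow> real \<Rightarrow> 'a::euclidean_space \<Rightarrow> real" where
  "robin_u1 h R \<alpha> = (SOME u. C1_cball R u \<and> wL2 h R u u > 0 \<and>
      robin_num h R \<alpha> u / wL2 h R u u = robin_lambda1 h R \<alpha> TYPE('a))"

definition robin_lambda2 :: "(real \<Rightarrow> real) \<Rightarrow> real \<Rightarrow> real \<Rightarrow> 'a::euclidean_space itself \<Rightarrow> real" where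
  "robin_lambda2 h R \<alpha> _ = Inf {robin_num h R \<alpha> u / wL2 h R u u | u :: 'a \<Rightarrow> real.
      C1_cball R u \<and> wL2 h R u u > 0 \<and> wL2 h R u (robin_u1 h R \<alpha>) = 0}"

definition steklov_sigma1 :: "(real \<Rightarrow> real) \<Rightarrow> real \<Rightarrow> 'a::euclidean_space itself \<Rightarrow> real" where
  "steklov_sigma1 h R _ = Inf {integral (ball 0 R) (\<lambda>x. grad_sq u x * exp (h (norm x)))
        / sphere_integral R (\<lambda>x. (u x)^2 * exp (h (norm x))) | u :: 'a \<Rightarrow> real.
      C1_cball R u \<and> sphere_integral R (\<lambda>x. (u x)^2 * exp (h (norm x))) > 0 \<and>
      sphere_integral R (\<lambda>x. u x * exp (h (norm x))) = 0}"

definition gext :: "(real \<Rightarrow> real) \<Rightarrow> real \<Rightarrow> real \<Rightarrow> real \<Rightarrow> real" where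
  "gext g R \<alpha> r = (if r \<le> R then g r else g R * exp (- \<alpha> * (r - R)))"

definition gext' :: "(real \<Rightarrow> real) \<Rightarrow> (real \<Rightarrow> real) \<Rightarrow> real \<Rightarrow> real \<Rightarrow> real \<Rightarrow> real" where
  "gext' g g' R \<alpha> r = (if r \<le> R then g' r else - \<alpha> * g R * exp (- \<alpha> * (r - R)))"

end

theory Submission
  imports Defs
begin

(*
  Let w(r) = r^(m-1) e^(h(r)) be the radial density of gamma_h. Testing the Steklov quotient with the
  fields x |-> G(|x|) x_b / |x| (b a coordinate direction; their boundary means vanish by oddness)
  and summing over b gives
    - alpha R^(m-1) e^(h(R)) G(R)^2 <= int_0^R (G'^2 + (m-1) (G/r)^2) w.
  For G = g, integrating by parts against the ODE turns the right-hand side into the boundary term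
  plus lambda int_0^R g^2 w, so lambda >= 0; for G(r) = r it gives - alpha R <= 1.
  The latter makes V(r) = (m-1)/r^2 + alpha (m-1)/r + alpha h'(r) - alpha^2 - lambda decreasing.
  The Robin flux e^(-alpha r) w (g' + alpha g) has derivative e^(-alpha r) w g V and vanishes at 0
  and at R, hence it is nonnegative. On (0,R) the ODE writes F' as a sum of terms that are
  nonpositive by these facts and h', h'' >= 0, one of them being -2 lambda g (g' + alpha g).
  On [R, infinity) F is a nonnegative multiple of e^(-2 alpha r) (V(r) + lambda), which decreases.
*)

section \<open>Integrals of radial functions over balls\<close>

lemma integral_ball_one:
  assumes "0 \<le> t"
  shows "integral (ball (0::'a::euclidean_space) t) (\<lambda>x. 1::real) = unit_ball_vol (real DIM('a)) * t ^ DIM('a)"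
  using lmeasure_integral[of "ball (0::'a) t"] content_ball[OF assms, of "0::'a"] by simp

lemma continuous_on_compact_integrable_on:
  fixes f :: "'a::euclidean_space \<Rightarrow> real"
  assumes f: "continuous_on K f" and "compact K" "A \<subseteq> K" "A \<in> lmeasurable"
  shows "f integrable_on A"
proof -
  obtain B where B: "\<And>x. x \<in> K \<Longrightarrow> norm (f x) \<le> B"
    using compact_continuous_image[OF f \<open>compact K\<close>] compact_imp_bounded by (metis bounded_iff imageI)
  show ?thesis
  proof (rule measurable_bounded_by_integrable_imp_integrable[where g="\<lambda>_. B"])
    show "f \<in> borel_measurable (lebesgue_on A)"
      using assms by (intro continuous_imp_measurable_on_sets_lebesgue continuous_on_subset[OF f]) auto
  qed (use assms B in \<open>auto simp: integrable_on_const\<close>)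
qed

lemma integrable_on_radial:
  fixes c :: "real \<Rightarrow> real"
  assumes "continuous_on {0..R} c" "A \<subseteq> cball (0::'a::euclidean_space) R" "A \<in> lmeasurable"
  shows "(\<lambda>x::'a. c (norm x)) integrable_on A"
  by (rule continuous_on_compact_integrable_on[where K="cball 0 R"])
    (use assms in \<open>auto intro: continuous_on_compose2[OF assms(1)] continuous_intros\<close>)

lemma integral_annulus_radial_bound:
  fixes c :: "real \<Rightarrow> real"
  defines "V \<equiv> \<lambda>t. unit_ball_vol (real DIM('a::euclidean_space)) * t ^ DIM('a)"
  assumes c: "continuous_on {0..R} c" and ab: "0 \<le> a" "a \<le> b" "b \<le> R"
    and close: "\<And>r. r \<in> {a..b} \<Longrightarrow> \<bar>c r - C\<bar> \<le> e"
  shows "\<bar>integral (ball (0::'a) b) (\<lambda>x. c (norm x)) - integral (ball (0::'a) a) (\<lambda>x. c (norm x))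
           - C * (V b - V a)\<bar> \<le> e * (V b - V a)"
proof -
  let ?A = "ball (0::'a) b - ball 0 a"
  have int: "(\<lambda>x::'a. d (norm x)) integrable_on ball 0 t"
    if "continuous_on {0..R} d" "t \<le> R" for d :: "real \<Rightarrow> real" and t
    by (rule integrable_on_radial[OF that(1)]) (use that in auto)
  have split: "integral ?A (\<lambda>x. d (norm x))
      = integral (ball 0 b) (\<lambda>x::'a. d (norm x)) - integral (ball 0 a) (\<lambda>x::'a. d (norm x))"
    if "continuous_on {0..R} d" for d :: "real \<Rightarrow> real"
  proof (rule integral_setdiff)
    have "ball (0::'a) a - ball 0 b = {}" using ab by auto
    then show "negligible (ball (0::'a) a - ball 0 b)" by simp
  qed (use int[OF that] ab in auto)
  have Am: "?A \<in> lmeasurable" by (intro fmeasurable_Diff) auto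
  have vol: "integral ?A (\<lambda>x. 1) = V b - V a"
    using split[of "\<lambda>_. 1"] ab by (simp add: integral_ball_one V_def)
  have intc: "(\<lambda>x::'a. c (norm x)) integrable_on ?A"
    by (rule integrable_on_radial[OF c]) (use ab Am in auto)
  have const: "integral ?A (\<lambda>x. k) = k * integral ?A (\<lambda>x. 1)" for k :: real
    using integral_mult_right[of ?A k "\<lambda>x. 1::real"] by simp
  have "norm (integral ?A (\<lambda>x. c (norm x) - C)) \<le> integral ?A (\<lambda>x. e)"
    by (rule integral_norm_bound_integral)
      (use intc Am close in \<open>auto intro: integrable_diff simp: integrable_on_const\<close>)
  moreover have "integral ?A (\<lambda>x. c (norm x) - C) = integral ?A (\<lambda>x. c (norm x)) - C * integral ?A (\<lambda>x. 1)"
    using integral_diff[OF intc integrable_on_const[OF Am, of C]] const[of C] by simp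
  ultimately show ?thesis using split[OF c] vol const[of e] by simp
qed

lemma has_real_derivative_zero_if_dominated:
  assumes V: "(V has_real_derivative V') (at t within S)"
    and dom: "\<And>e. e > 0 \<Longrightarrow> eventually (\<lambda>y. \<bar>P y - P t\<bar> \<le> e * \<bar>V y - V t\<bar>) (at t within S)"
  shows "(P has_real_derivative 0) (at t within S)"
proof -
  define K where "K = \<bar>V'\<bar> + 1"
  have K: "K > 0" by (simp add: K_def)
  have "((\<lambda>y. \<bar>(V y - V t) / (y - t)\<bar>) \<longlongrightarrow> \<bar>V'\<bar>) (at t within S)"
    using V by (intro tendsto_rabs) (simp add: has_field_derivative_iff)
  then have quotV: "eventually (\<lambda>y. \<bar>(V y - V t) / (y - t)\<bar> < K) (at t within S)"
    by (rule order_tendstoD(2)) (simp add: K_def)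
  have "((\<lambda>y. (P y - P t) / (y - t)) \<longlongrightarrow> 0) (at t within S)"
  proof (rule tendstoI)
    fix e :: real assume e: "e > 0"
    have "eventually (\<lambda>y. y \<noteq> t) (at t within S)" by (simp add: eventually_at_filter)
    moreover have "eventually (\<lambda>y. \<bar>P y - P t\<bar> \<le> e / (2 * K) * \<bar>V y - V t\<bar>) (at t within S)"
      by (rule dom) (use e K in simp)
    ultimately show "eventually (\<lambda>y. dist ((P y - P t) / (y - t)) 0 < e) (at t within S)"
    using quotV proof eventually_elim
      case (elim y)
      have "\<bar>P y - P t\<bar> / \<bar>y - t\<bar> \<le> e / (2 * K) * \<bar>V y - V t\<bar> / \<bar>y - t\<bar>"
        by (rule divide_right_mono) (use elim in auto)
      then have "\<bar>(P y - P t) / (y - t)\<bar> \<le> e / (2 * K) * \<bar>(V y - V t) / (y - t)\<bar>"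
        by (simp add: abs_divide)
      also have "\<dots> \<le> e / (2 * K) * K"
        using elim e K by (intro mult_left_mono) auto
      also have "\<dots> < e" using e K by simp
      finally show ?case by (simp add: dist_real_def)
    qed
  qed
  then show ?thesis by (simp add: has_field_derivative_iff)
qed

lemma has_real_derivative_integral_ball_radial:
  fixes c :: "real \<Rightarrow> real"
  assumes c: "continuous_on {0..R} c" and t: "t \<in> {0..R}"
  shows "((\<lambda>s. integral (ball (0::'a::euclidean_space) s) (\<lambda>x. c (norm x))) has_real_derivative
           c t * (unit_ball_vol (real DIM('a)) * (real DIM('a) * t ^ (DIM('a) - 1)))) (at t within {0..R})"
proof -
  define V where "V = (\<lambda>s. unit_ball_vol (real DIM('a)) * s ^ DIM('a))"
  define I where "I = (\<lambda>s. integral (ball (0::'a) s) (\<lambda>x. c (norm x)))"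
  have V: "(V has_real_derivative unit_ball_vol (real DIM('a)) * (real DIM('a) * t ^ (DIM('a) - 1)))
      (at t within {0..R})"
    unfolding V_def by (auto intro!: derivative_eq_intros)
  have V_mono: "V s \<le> V s'" if "0 \<le> s" "s \<le> s'" for s s'
    unfolding V_def using that by (auto intro!: mult_left_mono power_mono simp: unit_ball_vol_nonneg)
  have "((\<lambda>s. I s - c t * V s) has_real_derivative 0) (at t within {0..R})"
  proof (rule has_real_derivative_zero_if_dominated[OF V])
    fix e :: real assume "e > 0"
    then obtain d where d: "d > 0" "\<And>r. r \<in> {0..R} \<Longrightarrow> dist r t < d \<Longrightarrow> dist (c r) (c t) < e"
      using c t unfolding continuous_on_iff by metis
    have "\<bar>(I y - c t * V y) - (I t - c t * V t)\<bar> \<le> e * \<bar>V y - V t\<bar>"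
      if y: "y \<in> {0..R}" "dist y t < d" for y
    proof (cases "t \<le> y")
      case True
      have "\<bar>I y - I t - c t * (V y - V t)\<bar> \<le> e * (V y - V t)"
        unfolding I_def V_def
        by (rule integral_annulus_radial_bound[OF c])
          (use t y True d(2) in \<open>auto simp: dist_real_def less_imp_le\<close>)
      then show ?thesis using V_mono[of t y] t True by (simp add: algebra_simps)
    next
      case False
      have "\<bar>I t - I y - c t * (V t - V y)\<bar> \<le> e * (V t - V y)"
        unfolding I_def V_def
        by (rule integral_annulus_radial_bound[OF c])
          (use t y False d(2) in \<open>auto simp: dist_real_def less_imp_le\<close>)
      then show ?thesis using V_mono[of y t] y False by (simp add: algebra_simps abs_minus_commute)
    qed
    with d(1) show "eventually (\<lambda>y. \<bar>(I y - c t * V y) - (I t - c t * V t)\<bar> \<le> e * \<bar>V y - V t\<bar>)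
        (at t within {0..R})"
      unfolding eventually_at by blast
  qed
  then have "((\<lambda>s. (I s - c t * V s) + c t * V s) has_real_derivative
      0 + c t * (unit_ball_vol (real DIM('a)) * (real DIM('a) * t ^ (DIM('a) - 1)))) (at t within {0..R})"
    by (intro DERIV_add DERIV_cmult V)
  then show ?thesis by (simp add: I_def)
qed

lemma has_integral_radial_ball:
  fixes c :: "real \<Rightarrow> real"
  assumes c: "continuous_on {0..R} c" and R: "0 \<le> R"
  shows "((\<lambda>x::'a::euclidean_space. c (norm x)) has_integral
          real DIM('a) * unit_ball_vol (real DIM('a)) * integral {0..R} (\<lambda>r. c r * r ^ (DIM('a) - 1))) (ball 0 R)"
proof -
  define k where "k = real DIM('a) * unit_ball_vol (real DIM('a))"
  define I where "I = (\<lambda>s. integral (ball (0::'a) s) (\<lambda>x. c (norm x)))"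
  have "((\<lambda>r. c r * (unit_ball_vol (real DIM('a)) * (real DIM('a) * r ^ (DIM('a) - 1))))
      has_integral I R - I 0) {0..R}"
    by (rule fundamental_theorem_of_calculus[OF R])
      (use has_real_derivative_integral_ball_radial[OF c] in
        \<open>auto simp: I_def has_real_derivative_iff_has_vector_derivative[symmetric]\<close>)
  then have "((\<lambda>r. k * (c r * r ^ (DIM('a) - 1))) has_integral I R) {0..R}"
    by (simp add: I_def k_def algebra_simps)
  then have "I R = k * integral {0..R} (\<lambda>r. c r * r ^ (DIM('a) - 1))"
    by (metis integral_mult_right integral_unique)
  moreover have "(\<lambda>x::'a. c (norm x)) integrable_on ball 0 R"
    by (rule integrable_on_radial[OF c]) auto
  ultimately show ?thesis by (simp add: I_def k_def has_integral_integral)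
qed

section \<open>Radial test fields and the Steklov bound\<close>

lemma sum_Basis_inner_sq: "(\<Sum>b\<in>Basis. (x \<bullet> b)^2) = (norm x)^2"
  using power2_norm_eq_inner[of x] euclidean_inner[of x x] by (simp add: power2_eq_square)

lemma integral_ball_odd_eq_0:
  fixes f :: "'a::euclidean_space \<Rightarrow> real"
  assumes meas: "f \<in> borel_measurable borel" and bnd: "\<And>x. \<bar>f x\<bar> \<le> B"
    and odd: "\<And>x. f (- x) = - f x"
  shows "integral (ball 0 r) f = 0"
proof -
  have [measurable]: "f \<in> borel_measurable lborel" using meas by simp
  have si: "set_integrable lborel (ball (0::'a) r) f"
    unfolding set_integrable_def
    by (rule integrableI_bounded_set[where A="ball 0 r" and B=B])
      (use bnd emeasure_lborel_ball_finite in \<open>auto simp: indicator_def\<close>)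
  define F where "F = (\<lambda>x::'a. indicator (ball (0::'a) r) x *\<^sub>R f x)"
  have [measurable]: "F \<in> borel_measurable lborel"
    unfolding F_def by (intro borel_measurable_scaleR borel_measurable_indicator) auto
  have "(\<integral>x. F x \<partial>lborel) = (\<integral>x. F x \<partial>(distr lborel borel (\<lambda>x::'a. - x)))"
    using lborel_affine[of "-1::real" "0::'a"] by (simp add: density_1)
  also have "\<dots> = (\<integral>x. F (- x) \<partial>lborel)"
    by (rule integral_distr) auto
  also have "\<dots> = - (\<integral>x. F x \<partial>lborel)"
    by (simp add: F_def odd indicator_def)
  finally have "(LINT x:ball 0 r|lborel. f x) = 0"
    unfolding set_lebesgue_integral_def F_def by simp
  then show ?thesis using set_borel_integral_eq_integral(2)[OF si] by simp
qed

lemma integral_nonneg_unconditional: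
  fixes f :: "'a::euclidean_space \<Rightarrow> real"
  assumes "\<And>x. x \<in> S \<Longrightarrow> 0 \<le> f x"
  shows "0 \<le> integral S f"
  using integral_nonneg[OF _ assms] not_integrable_integral[of f S] by (cases "f integrable_on S") auto

lemma grad_sq_nonneg: "0 \<le> grad_sq u x"
  unfolding grad_sq_def by (intro sum_nonneg) auto

lemma sphere_integral_nonneg:
  assumes "0 \<le> R" "\<And>x. 0 \<le> f x"
  shows "0 \<le> sphere_integral R (f :: 'a::euclidean_space \<Rightarrow> real)"
  unfolding sphere_integral_def using assms
  by (intro mult_nonneg_nonneg integral_nonneg_unconditional) auto

lemma steklov_sigma1_bound:
  fixes u :: "'a::euclidean_space \<Rightarrow> real"
  assumes R: "0 \<le> R" and u: "C1_cball R u" "sphere_integral R (\<lambda>x. u x * exp (h (norm x))) = 0"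
    and \<alpha>: "- steklov_sigma1 h R TYPE('a) \<le> \<alpha>"
  shows "- \<alpha> * sphere_integral R (\<lambda>x. (u x)^2 * exp (h (norm x)))
           \<le> integral (ball 0 R) (\<lambda>x. grad_sq u x * exp (h (norm x)))"
proof -
  define S where "S = sphere_integral R (\<lambda>x. (u x)^2 * exp (h (norm x)))"
  define N where "N = integral (ball 0 R) (\<lambda>x. grad_sq u x * exp (h (norm x)))"
  have N: "0 \<le> N" unfolding N_def by (intro integral_nonneg_unconditional) (simp add: grad_sq_nonneg)
  consider "S = 0" | "S > 0"
    using sphere_integral_nonneg[OF R, of "\<lambda>x. (u x)^2 * exp (h (norm x))"] by (force simp: S_def)
  then show ?thesis
  proof cases
    case 1
    then show ?thesis using N by (simp add: S_def N_def)
  next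
    case 2
    have "steklov_sigma1 h R TYPE('a) \<le> N / S"
      unfolding steklov_sigma1_def
    proof (rule cInf_lower)
      show "bdd_below {integral (ball 0 R) (\<lambda>x. grad_sq u x * exp (h (norm x))) /
             sphere_integral R (\<lambda>x. (u x)\<^sup>2 * exp (h (norm x))) |u :: 'a \<Rightarrow> real.
             C1_cball R u \<and> 0 < sphere_integral R (\<lambda>x. (u x)\<^sup>2 * exp (h (norm x))) \<and>
             sphere_integral R (\<lambda>x. u x * exp (h (norm x))) = 0}"
        by (rule bdd_belowI[of _ 0])
          (auto intro!: divide_nonneg_nonneg integral_nonneg_unconditional simp: grad_sq_nonneg)
    qed (use u 2 in \<open>auto simp: N_def S_def\<close>)
    moreover have "- \<alpha> * S \<le> steklov_sigma1 h R TYPE('a) * S"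
      using 2 \<alpha> by (intro mult_right_mono) auto
    ultimately have "- \<alpha> * S \<le> N" using 2 by (simp add: le_divide_eq)
    then show ?thesis by (simp add: S_def N_def)
  qed
qed

lemma integrable_inner_sq_div_norm_sq:
  fixes b :: "'a::euclidean_space"
  assumes b: "b \<in> Basis"
  shows "(\<lambda>x::'a. (x \<bullet> b)^2 / (norm x)^2) integrable_on ball 0 r"
proof (rule measurable_bounded_by_integrable_imp_integrable[where g="\<lambda>_. 1"])
  show "(\<lambda>x::'a. (x \<bullet> b)^2 / (norm x)^2) \<in> borel_measurable (lebesgue_on (ball 0 r))"
    by (intro measurable_restrict_space1 measurable_completion) (simp add: sets_lborel[symmetric])
  show "norm ((x \<bullet> b)^2 / (norm x)^2) \<le> 1" for x
  proof (cases "x = 0")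
    case False
    have "(x \<bullet> b)^2 \<le> (norm x)^2"
      using Basis_le_norm[OF b, of x] by (metis abs_le_square_iff abs_norm_cancel)
    then show ?thesis using False by (simp add: divide_le_eq)
  qed simp
qed (auto simp: integrable_on_const)

lemma sum_integral_inner_sq_div_norm_sq:
  "(\<Sum>b\<in>Basis. integral (ball (0::'a::euclidean_space) 1) (\<lambda>x. (x \<bullet> b)^2 / (norm x)^2))
     = unit_ball_vol (real DIM('a))"
proof -
  have "(\<Sum>b\<in>Basis. integral (ball (0::'a) 1) (\<lambda>x. (x \<bullet> b)^2 / (norm x)^2))
      = integral (ball (0::'a) 1) (\<lambda>x. \<Sum>b\<in>Basis. (x \<bullet> b)^2 / (norm x)^2)"
    by (rule integral_sum[symmetric]) (auto intro: integrable_inner_sq_div_norm_sq)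
  also have "\<dots> = integral (ball (0::'a) 1) (\<lambda>x. 1)"
    by (rule integral_spike[where S="{0}"]) (auto simp: sum_divide_distrib[symmetric] sum_Basis_inner_sq)
  finally show ?thesis using integral_ball_one[of 1] by simp
qed

lemma integral_ball_inner_div_norm:
  fixes b :: "'a::euclidean_space"
  assumes b: "b \<in> Basis"
  shows "integral (ball 0 1) (\<lambda>x::'a. (x \<bullet> b) / norm x) = 0"
proof (rule integral_ball_odd_eq_0[where B=1])
  show "\<bar>(x \<bullet> b) / norm x\<bar> \<le> 1" for x :: 'a
    using Basis_le_norm[OF b, of x] by (cases "x = 0") (auto simp: divide_le_eq abs_divide)
qed auto

definition chord_slope :: "(real \<Rightarrow> real) \<Rightarrow> (real \<Rightarrow> real) \<Rightarrow> real \<Rightarrow> real" where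
  "chord_slope G G' r = (if r = 0 then G' 0 else G r / r)"

text \<open>For \<open>G = g\<close> these are the Steklov test functions \<open>x \<mapsto> g(|x|) x\<^sub>b / |x|\<close>.\<close>
definition radial_field :: "(real \<Rightarrow> real) \<Rightarrow> (real \<Rightarrow> real) \<Rightarrow> 'a::euclidean_space \<Rightarrow> 'a \<Rightarrow> real" where
  "radial_field G G' b x = chord_slope G G' (norm x) * (x \<bullet> b)"

definition radial_field_deriv ::
    "(real \<Rightarrow> real) \<Rightarrow> (real \<Rightarrow> real) \<Rightarrow> 'a::euclidean_space \<Rightarrow> 'a \<Rightarrow> 'a \<Rightarrow> real" where
  "radial_field_deriv G G' b x v =
     (G' (norm x) - chord_slope G G' (norm x)) * (x \<bullet> v) * (x \<bullet> b) / (norm x)^2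
     + chord_slope G G' (norm x) * (v \<bullet> b)"

lemma sum_radial_field_deriv_sq:
  fixes x :: "'a::euclidean_space"
  shows "(\<Sum>b\<in>Basis. \<Sum>b'\<in>Basis. (radial_field_deriv G G' b x b')^2)
          = (G' (norm x))^2 + (real DIM('a) - 1) * (chord_slope G G' (norm x))^2"
proof -
  define s where "s = chord_slope G G' (norm x)"
  define A where "A = (G' (norm x) - s) / (norm x)^2"
  have inner: "(\<Sum>b'\<in>Basis. (radial_field_deriv G G' b x b')^2) = (A * (x \<bullet> b))^2 * (norm x)^2
      + 2 * A * s * (x \<bullet> b)^2 + s^2" if b: "b \<in> Basis" for b
  proof -
    have "(radial_field_deriv G G' b x b')^2 = (A * (x \<bullet> b))^2 * (x \<bullet> b')^2
        + (2 * A * (x \<bullet> b) * s) * ((x \<bullet> b') * (b' \<bullet> b)) + s^2 * (b' \<bullet> b)^2" for b'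
      by (simp add: radial_field_deriv_def A_def s_def power2_eq_square algebra_simps)
    then have "(\<Sum>b'\<in>Basis. (radial_field_deriv G G' b x b')^2)
        = (A * (x \<bullet> b))^2 * (\<Sum>b'\<in>Basis. (x \<bullet> b')^2)
          + (2 * A * (x \<bullet> b) * s) * (\<Sum>b'\<in>Basis. (x \<bullet> b') * (b' \<bullet> b)) + s^2 * (\<Sum>b'\<in>Basis. (b' \<bullet> b)^2)"
      by (simp add: sum.distrib sum_distrib_left)
    moreover have "(\<Sum>b'\<in>Basis. (x \<bullet> b') * (b' \<bullet> b)) = x \<bullet> b" "(\<Sum>b'\<in>Basis. (b' \<bullet> b)^2) = 1"
      using euclidean_inner[of x b] euclidean_inner[of b b] b
      by (simp_all add: inner_commute power2_eq_square)
    ultimately show ?thesis unfolding sum_Basis_inner_sq by (simp add: power2_eq_square)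
  qed
  have "(\<Sum>b\<in>Basis. \<Sum>b'\<in>Basis. (radial_field_deriv G G' b x b')^2)
      = A^2 * (norm x)^2 * (\<Sum>b\<in>Basis. (x \<bullet> b)^2) + 2 * A * s * (\<Sum>b\<in>Basis. (x \<bullet> b)^2)
        + real DIM('a) * s^2"
    by (simp add: inner power_mult_distrib sum.distrib sum_distrib_left algebra_simps)
  also have "\<dots> = A^2 * (norm x)^4 + 2 * A * s * (norm x)^2 + real DIM('a) * s^2"
    unfolding sum_Basis_inner_sq by (simp add: power2_eq_square power4_eq_xxxx)
  also have "\<dots> = (G' (norm x))^2 + (real DIM('a) - 1) * s^2"
    by (cases "x = 0")
      (simp_all add: A_def s_def chord_slope_def field_simps power2_eq_square power4_eq_xxxx)
  finally show ?thesis by (simp add: s_def)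
qed

context
  fixes G G' :: "real \<Rightarrow> real"
  assumes G_deriv: "\<And>r. r \<ge> 0 \<Longrightarrow> (G has_real_derivative G' r) (at r within {0..})"
    and G_0: "G 0 = 0"
begin

lemma continuous_on_chord_slope: "continuous_on {0..} (chord_slope G G')"
  unfolding continuous_on_eq_continuous_within
proof (intro ballI)
  fix x :: real assume x: "x \<in> {0..}"
  show "continuous (at x within {0..}) (chord_slope G G')"
  proof (cases "x = 0")
    case True
    have "((\<lambda>y. G y / y) \<longlongrightarrow> G' 0) (at 0 within {0..})"
      using G_deriv[of 0] G_0 by (simp add: has_field_derivative_iff)
    moreover have "eventually (\<lambda>y. G y / y = chord_slope G G' y) (at 0 within {0..})"
      by (simp add: eventually_at_filter chord_slope_def)
    ultimately have "(chord_slope G G' \<longlongrightarrow> G' 0) (at 0 within {0..})"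
      by (rule Lim_transform_eventually)
    then show ?thesis using True by (simp add: continuous_within chord_slope_def)
  next
    case False
    with x have x_pos: "x > 0" by simp
    have "(G \<longlongrightarrow> G x) (at x within {0..})"
      using DERIV_continuous[OF G_deriv[of x]] x_pos by (simp add: continuous_within)
    then have "((\<lambda>y. G y / y) \<longlongrightarrow> G x / x) (at x within {0..})"
      using x_pos by (intro tendsto_divide tendsto_ident_at) auto
    moreover have "eventually (\<lambda>y. G y / y = chord_slope G G' y) (at x within {0..})"
      unfolding eventually_at using x_pos
      by (auto simp: chord_slope_def dist_real_def intro!: exI[of _ x])
    ultimately have "(chord_slope G G' \<longlongrightarrow> G x / x) (at x within {0..})"
      by (rule Lim_transform_eventually)
    then show ?thesis using x_pos by (simp add: continuous_within chord_slope_def)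
  qed
qed

lemma isCont_chord_slope_norm: "isCont (\<lambda>x::'a::euclidean_space. chord_slope G G' (norm x)) x"
  using continuous_on_compose2[OF continuous_on_chord_slope continuous_on_norm_id, of UNIV]
  by (auto simp: continuous_on_eq_continuous_at image_subset_iff)

lemma has_derivative_radial_field:
  fixes b :: "'a::euclidean_space"
  assumes b: "b \<in> Basis"
  shows "(radial_field G G' b has_derivative radial_field_deriv G G' b x) (at x)"
proof (cases "x = 0")
  case False
  define r where "r = norm x"
  have r: "r > 0" using False by (simp add: r_def)
  have "(G has_real_derivative G' r) (at r)"
    using G_deriv[of r] r by (simp add: at_within_open[of r "{0<..}", symmetric]
        has_field_derivative_subset[of G "G' r" r "{0..}" "{0<..}"] subset_eq)
  then have "((\<lambda>y. G y / y) has_real_derivative (G' r - chord_slope G G' r) / r) (at r)"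
    using r by (auto intro!: derivative_eq_intros simp: chord_slope_def field_simps power2_eq_square)
  then have "(chord_slope G G' has_real_derivative (G' r - chord_slope G G' r) / r) (at r)"
    by (rule has_field_derivative_transform_within_open[where S="{0<..}"])
      (use r in \<open>auto simp: chord_slope_def\<close>)
  then have slope: "((\<lambda>x. chord_slope G G' (norm x)) has_derivative
      (\<lambda>v. (G' r - chord_slope G G' r) / r * (v \<bullet> sgn x))) (at x)"
    using has_derivative_compose[OF has_derivative_norm[OF False]] unfolding has_field_derivative_def r_def
    by blast
  have "(radial_field G G' b has_derivative
      (\<lambda>v. chord_slope G G' r * (v \<bullet> b) + (G' r - chord_slope G G' r) / r * (v \<bullet> sgn x) * (x \<bullet> b))) (at x)"
    unfolding radial_field_def r_def
    by (rule has_derivative_mult[OF slope[unfolded r_def] has_derivative_inner_left[OF has_derivative_ident]])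
  moreover have "(\<lambda>v. chord_slope G G' r * (v \<bullet> b) + (G' r - chord_slope G G' r) / r * (v \<bullet> sgn x) * (x \<bullet> b))
      = radial_field_deriv G G' b x"
    using r by (auto simp: fun_eq_iff radial_field_deriv_def r_def sgn_div_norm inner_commute
        field_simps power2_eq_square)
  ultimately show ?thesis by simp
next
  case True
  have "((\<lambda>y::'a. chord_slope G G' (norm y)) \<longlongrightarrow> G' 0) (at 0)"
    using isCont_chord_slope_norm[of 0] by (simp add: isCont_def chord_slope_def)
  then have lim: "((\<lambda>y::'a. \<bar>chord_slope G G' (norm y) - G' 0\<bar>) \<longlongrightarrow> 0) (at 0)"
    using tendsto_rabs[OF tendsto_diff[of _ "G' 0" _ "\<lambda>_. G' 0" "G' 0"]] by simp
  have bound: "\<bar>radial_field G G' b y - G' 0 * (y \<bullet> b)\<bar> / norm y \<le> \<bar>chord_slope G G' (norm y) - G' 0\<bar>"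
    for y :: 'a
  proof -
    have "\<bar>(chord_slope G G' (norm y) - G' 0) * (y \<bullet> b)\<bar> \<le> \<bar>chord_slope G G' (norm y) - G' 0\<bar> * norm y"
      by (simp add: abs_mult mult_left_mono Basis_le_norm[OF b])
    then show ?thesis
      by (cases "y = 0") (auto simp: radial_field_def divide_le_eq algebra_simps)
  qed
  have "((\<lambda>y. norm (radial_field G G' b y - radial_field G G' b 0 - G' 0 * ((y - 0) \<bullet> b)) / norm (y - 0))
      \<longlongrightarrow> 0) (at (0::'a))"
    by (rule Lim_null_comparison[OF always_eventually lim]) (use bound in \<open>simp add: radial_field_def\<close>)
  moreover have "radial_field_deriv G G' b 0 = (\<lambda>v. G' 0 * (v \<bullet> b))"
    by (simp add: fun_eq_iff radial_field_deriv_def chord_slope_def)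
  ultimately show ?thesis
    unfolding True has_derivative_iff_norm by (auto intro!: bounded_linear_intros)
qed

lemma continuous_on_radial_field_deriv:
  fixes b b' :: "'a::euclidean_space"
  assumes b: "b \<in> Basis" "b' \<in> Basis" and G'_cont: "continuous_on {0..} G'"
  shows "continuous_on UNIV (\<lambda>x. radial_field_deriv G G' b x b')"
proof -
  define A where "A = (\<lambda>x::'a. G' (norm x) - chord_slope G G' (norm x))"
  have "isCont (\<lambda>x::'a. G' (norm x)) x" for x
    using continuous_on_compose2[OF G'_cont continuous_on_norm_id, of UNIV]
    by (auto simp: continuous_on_eq_continuous_at image_subset_iff)
  then have A_cont: "isCont A x" for x
    unfolding A_def using isCont_chord_slope_norm by (intro continuous_intros)
  have quotient_cont: "isCont (\<lambda>x. A x * (x \<bullet> b') * (x \<bullet> b) / (norm x)^2) x" for x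
  proof (cases "x = 0")
    case False
    then show ?thesis using A_cont by (intro continuous_intros) auto
  next
    case True
    have "A 0 = 0" by (simp add: A_def chord_slope_def)
    then have lim: "((\<lambda>y. \<bar>A y\<bar>) \<longlongrightarrow> 0) (at (0::'a))"
      using A_cont[of 0] by (metis abs_zero isCont_def tendsto_rabs)
    have "norm (A y * (y \<bullet> b') * (y \<bullet> b) / (norm y)^2) \<le> \<bar>A y\<bar>" for y :: 'a
    proof -
      have "\<bar>y \<bullet> b'\<bar> * \<bar>y \<bullet> b\<bar> \<le> norm y * norm y"
        using Basis_le_norm[OF b(1), of y] Basis_le_norm[OF b(2), of y] by (intro mult_mono) auto
      then have "\<bar>A y\<bar> * (\<bar>y \<bullet> b'\<bar> * \<bar>y \<bullet> b\<bar>) \<le> \<bar>A y\<bar> * (norm y)^2"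
        by (simp add: power2_eq_square mult_left_mono)
      then show ?thesis
        by (cases "y = 0") (auto simp: abs_mult divide_le_eq mult.assoc)
    qed
    then have "((\<lambda>y. A y * (y \<bullet> b') * (y \<bullet> b) / (norm y)^2) \<longlongrightarrow> 0) (at (0::'a))"
      by (intro Lim_null_comparison[OF always_eventually lim]) auto
    then show ?thesis using True by (simp add: isCont_def)
  qed
  have "(\<lambda>x. radial_field_deriv G G' b x b')
      = (\<lambda>x. A x * (x \<bullet> b') * (x \<bullet> b) / (norm x)^2 + chord_slope G G' (norm x) * (b' \<bullet> b))"
    by (simp add: fun_eq_iff radial_field_deriv_def A_def)
  moreover have "isCont (\<lambda>x. A x * (x \<bullet> b') * (x \<bullet> b) / (norm x)^2 + chord_slope G G' (norm x) * (b' \<bullet> b)) x"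
    for x by (intro continuous_add continuous_mult_right isCont_chord_slope_norm quotient_cont)
  ultimately have "isCont (\<lambda>x. radial_field_deriv G G' b x b') x" for x by simp
  then show ?thesis by (simp add: continuous_on_eq_continuous_at)
qed

lemma frechet_derivative_radial_field:
  "b \<in> Basis \<Longrightarrow> frechet_derivative (radial_field G G' b) (at x) = radial_field_deriv G G' b x"
  by (rule frechet_derivative_at[OF has_derivative_radial_field, symmetric])

lemma C1_cball_radial_field:
  assumes "b \<in> Basis" and "continuous_on {0..} G'"
  shows "C1_cball R (radial_field G G' (b::'a::euclidean_space))"
  unfolding C1_cball_def
proof (intro exI[of _ UNIV] conjI)
  show "\<forall>x\<in>UNIV. radial_field G G' b differentiable (at x)"
    using has_derivative_radial_field[OF assms(1)] unfolding differentiable_def by blast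
  show "\<forall>b'\<in>Basis. continuous_on UNIV (\<lambda>x. frechet_derivative (radial_field G G' b) (at x) b')"
    using continuous_on_radial_field_deriv[OF assms(1) _ assms(2)] frechet_derivative_radial_field[OF assms(1)]
    by simp
qed auto

lemma grad_sq_radial_field:
  "b \<in> Basis \<Longrightarrow> grad_sq (radial_field G G' b) x = (\<Sum>b'\<in>Basis. (radial_field_deriv G G' b x b')^2)"
  unfolding grad_sq_def by (simp add: frechet_derivative_radial_field)

end

lemma sphere_integral_radial_field:
  fixes b :: "'a::euclidean_space"
  assumes "b \<in> Basis" "R > 0"
  shows "sphere_integral R (\<lambda>x::'a. radial_field G G' b x * exp (h (norm x))) = 0"
proof -
  have eq: "(\<lambda>x::'a. radial_field G G' b ((R / norm x) *\<^sub>R x) * exp (h (norm ((R / norm x) *\<^sub>R x))))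
      = (\<lambda>x. (G R * exp (h R)) * ((x \<bullet> b) / norm x))"
    using assms(2) by (auto simp: fun_eq_iff radial_field_def chord_slope_def)
  show ?thesis
    unfolding sphere_integral_def eq integral_mult_right integral_ball_inner_div_norm[OF assms(1)] by simp
qed

lemma sum_sphere_integral_radial_field_sq:
  assumes "R > 0"
  shows "(\<Sum>b\<in>Basis. sphere_integral R (\<lambda>x::'a::euclidean_space. (radial_field G G' b x)^2 * exp (h (norm x))))
           = real DIM('a) * R ^ (DIM('a) - 1) * (G R)^2 * exp (h R) * unit_ball_vol (real DIM('a))"
proof -
  have eq: "(\<lambda>x::'a. (radial_field G G' b ((R / norm x) *\<^sub>R x))^2 * exp (h (norm ((R / norm x) *\<^sub>R x))))
      = (\<lambda>x. ((G R)^2 * exp (h R)) * ((x \<bullet> b)^2 / (norm x)^2))" for b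
    using assms by (auto simp: fun_eq_iff radial_field_def chord_slope_def power2_eq_square)
  show ?thesis
    unfolding sphere_integral_def eq integral_mult_right
    by (simp add: sum_distrib_left[symmetric] sum_integral_inner_sq_div_norm_sq)
qed

lemma sum_integral_grad_sq_radial_field:
  fixes h :: "real \<Rightarrow> real"
  assumes G_deriv: "\<And>r. r \<ge> 0 \<Longrightarrow> (G has_real_derivative G' r) (at r within {0..})"
    and G_0: "G 0 = 0" and G'_cont: "continuous_on {0..} G'"
    and h_cont: "continuous_on {0..R} h" and R: "0 \<le> R"
  shows "(\<Sum>b\<in>Basis. integral (ball (0::'a::euclidean_space) R)
            (\<lambda>x. grad_sq (radial_field G G' b) x * exp (h (norm x))))
         = real DIM('a) * unit_ball_vol (real DIM('a)) * integral {0..R}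
             (\<lambda>r. ((G' r)^2 + (real DIM('a) - 1) * (chord_slope G G' r)^2) * exp (h r) * r ^ (DIM('a) - 1))"
proof -
  define c where "c = (\<lambda>r. ((G' r)^2 + (real DIM('a) - 1) * (chord_slope G G' r)^2) * exp (h r))"
  have "continuous_on {0..R} G'" "continuous_on {0..R} (chord_slope G G')"
    using continuous_on_subset[OF G'_cont] continuous_on_subset[OF continuous_on_chord_slope[OF G_deriv G_0]]
    by auto
  then have c_cont: "continuous_on {0..R} c"
    unfolding c_def by (intro continuous_intros h_cont)
  have grad_cont: "continuous_on UNIV (\<lambda>x::'a. grad_sq (radial_field G G' b) x)" if "b \<in> Basis" for b
    using continuous_on_radial_field_deriv[OF G_deriv G_0 that _ G'_cont]
    by (simp add: grad_sq_radial_field[OF G_deriv G_0 that] continuous_on_sum continuous_on_power)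
  have "continuous_on (cball 0 R) (\<lambda>x::'a. h (norm x))"
    by (rule continuous_on_compose2[OF h_cont continuous_on_norm_id]) auto
  then have integrand_cont:
    "continuous_on (cball 0 R) (\<lambda>x::'a. grad_sq (radial_field G G' b) x * exp (h (norm x)))"
    if "b \<in> Basis" for b
    by (intro continuous_on_mult continuous_on_exp continuous_on_subset[OF grad_cont[OF that]]) auto
  have int: "(\<lambda>x. grad_sq (radial_field G G' b) x * exp (h (norm x))) integrable_on ball (0::'a) R"
    if "b \<in> Basis" for b
    by (rule continuous_on_compact_integrable_on[OF integrand_cont[OF that] compact_cball ball_subset_cball])
      simp
  have "(\<Sum>b\<in>Basis. integral (ball (0::'a) R) (\<lambda>x. grad_sq (radial_field G G' b) x * exp (h (norm x))))
      = integral (ball (0::'a) R) (\<lambda>x. \<Sum>b\<in>Basis. grad_sq (radial_field G G' b) x * exp (h (norm x)))"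
    by (rule integral_sum[symmetric]) (auto intro: int)
  also have "\<dots> = integral (ball (0::'a) R) (\<lambda>x. c (norm x))"
  proof (rule integral_cong)
    fix x :: 'a
    have "(\<Sum>b\<in>Basis. grad_sq (radial_field G G' b) x * exp (h (norm x)))
        = (\<Sum>b\<in>Basis. \<Sum>b'\<in>Basis. (radial_field_deriv G G' b x b')^2) * exp (h (norm x))"
      by (simp add: grad_sq_radial_field[OF G_deriv G_0] sum_distrib_right)
    then show "(\<Sum>b\<in>Basis. grad_sq (radial_field G G' b) x * exp (h (norm x))) = c (norm x)"
      by (simp only: sum_radial_field_deriv_sq c_def)
  qed
  also have "\<dots> = real DIM('a) * unit_ball_vol (real DIM('a)) * integral {0..R} (\<lambda>r. c r * r ^ (DIM('a) - 1))"
    using has_integral_radial_ball[OF c_cont R] by (rule integral_unique)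
  finally show ?thesis by (simp add: c_def)
qed

lemma steklov_radial_bound:
  fixes h :: "real \<Rightarrow> real"
  assumes G_deriv: "\<And>r. r \<ge> 0 \<Longrightarrow> (G has_real_derivative G' r) (at r within {0..})"
    and G_0: "G 0 = 0" and G'_cont: "continuous_on {0..} G'"
    and h_cont: "continuous_on {0..R} h" and R: "0 < R"
    and \<alpha>: "- steklov_sigma1 h R TYPE('a::euclidean_space) \<le> \<alpha>"
  shows "- \<alpha> * R ^ (DIM('a) - 1) * (G R)^2 * exp (h R)
           \<le> integral {0..R}
                (\<lambda>r. ((G' r)^2 + (real DIM('a) - 1) * (chord_slope G G' r)^2) * exp (h r) * r ^ (DIM('a) - 1))"
proof -
  define k where "k = real DIM('a) * unit_ball_vol (real DIM('a))"
  have "- \<alpha> * (\<Sum>b\<in>Basis. sphere_integral R (\<lambda>x::'a. (radial_field G G' b x)^2 * exp (h (norm x))))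
      \<le> (\<Sum>b\<in>Basis. integral (ball (0::'a) R) (\<lambda>x. grad_sq (radial_field G G' b) x * exp (h (norm x))))"
    unfolding sum_distrib_left
    by (intro sum_mono steklov_sigma1_bound C1_cball_radial_field[OF G_deriv G_0 _ G'_cont]
        sphere_integral_radial_field \<alpha>) (use R in auto)
  then have "k * (- \<alpha> * R ^ (DIM('a) - 1) * (G R)^2 * exp (h R))
      \<le> k * integral {0..R}
              (\<lambda>r. ((G' r)^2 + (real DIM('a) - 1) * (chord_slope G G' r)^2) * exp (h r) * r ^ (DIM('a) - 1))"
    using sum_sphere_integral_radial_field_sq[OF R, of G G' h, where 'a='a]
      sum_integral_grad_sq_radial_field[OF G_deriv G_0 G'_cont h_cont less_imp_le[OF R], where 'a='a]
    by (simp add: k_def algebra_simps)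
  moreover have "k > 0" by (simp add: k_def)
  ultimately show ?thesis by (rule mult_left_le_imp_le)
qed

section \<open>The radial profile\<close>

definition radial_energy ::
    "nat \<Rightarrow> real \<Rightarrow> (real \<Rightarrow> real) \<Rightarrow> (real \<Rightarrow> real) \<Rightarrow> (real \<Rightarrow> real) \<Rightarrow> real \<Rightarrow> real" where
  "radial_energy m \<alpha> h' u u' r = (u' r)^2 + (real m - 1) / r^2 * (u r)^2 + 2 * \<alpha> * u r * u' r
     + \<alpha> * ((real m - 1) / r + h' r) * (u r)^2"

text \<open>On \<open>[R, \<infinity>)\<close> the energy of the exponential extension of \<open>g\<close> is a nonnegative multiple
  of this function, see \<open>energy_gext_exterior\<close>.\<close>
lemma exp_weighted_potential_antimono:
  fixes h' h'' :: "real \<Rightarrow> real"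
  assumes k: "k \<ge> 0" and \<alpha>: "\<alpha> \<le> 0"
    and h'_deriv: "\<And>r. r > 0 \<Longrightarrow> (h' has_real_derivative h'' r) (at r)"
    and h'_nonneg: "\<And>r. r > 0 \<Longrightarrow> h' r \<ge> 0" and h''_nonneg: "\<And>r. r > 0 \<Longrightarrow> h'' r \<ge> 0"
    and xy: "0 < x" "x \<le> y"
  shows "exp (- 2 * \<alpha> * y) * (k / y^2 + \<alpha> * k / y + \<alpha> * h' y - \<alpha>^2)
           \<le> exp (- 2 * \<alpha> * x) * (k / x^2 + \<alpha> * k / x + \<alpha> * h' x - \<alpha>^2)"
    (is "?P y \<le> ?P x")
proof (rule DERIV_nonpos_imp_decreasing_open[OF xy(2)])
  have "isCont h' r" if "r > 0" for r
    using h'_deriv[OF that] by (rule DERIV_isCont)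
  then have "continuous_on {x..y} h'"
    using xy by (intro continuous_at_imp_continuous_on) auto
  then show "continuous_on {x..y} ?P"
    using xy by (auto intro!: continuous_intros)
  fix t assume t: "x < t" "t < y"
  then have t0: "t > 0" using xy by simp
  have deriv: "(?P has_real_derivative exp (- 2 * \<alpha> * t) *
      (2 * \<alpha>^3 - 2 * \<alpha>^2 * h' t + \<alpha> * h'' t - k / t^3 * (2 * \<alpha>^2 * t^2 + 3 * \<alpha> * t + 2))) (at t)"
    using t0 by (auto intro!: derivative_eq_intros h'_deriv
        simp: field_simps power2_eq_square power3_eq_cube)
  have "2 * \<alpha>^2 * t^2 + 3 * \<alpha> * t + 2 = 2 * (\<alpha> * t + 3/4)^2 + 7/8"
    by (simp add: power2_eq_square algebra_simps)
  then have "k / t^3 * (2 * \<alpha>^2 * t^2 + 3 * \<alpha> * t + 2) \<ge> 0"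
    using k t0 by (simp add: add_nonneg_pos)
  moreover have "2 * \<alpha>^3 \<le> 0" "\<alpha>^2 * h' t \<ge> 0" "\<alpha> * h'' t \<le> 0"
    using \<alpha> h'_nonneg[OF t0] h''_nonneg[OF t0]
    by (auto simp: power3_eq_cube mult_nonpos_nonneg mult_nonneg_nonpos2 zero_le_mult_iff)
  ultimately have "2 * \<alpha>^3 - 2 * \<alpha>^2 * h' t + \<alpha> * h'' t - k / t^3 * (2 * \<alpha>^2 * t^2 + 3 * \<alpha> * t + 2) \<le> 0"
    by linarith
  with deriv show "\<exists>d. (?P has_real_derivative d) (at t) \<and> d \<le> 0"
    by (intro exI conjI) (assumption, simp add: mult_nonneg_nonpos)
qed

text \<open>The eigenvalue enters only through the ODE, so it is the parameter \<open>lam\<close> here.\<close>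
locale radial_robin_profile =
  fixes m :: nat and R \<alpha> lam :: real and h h' h'' g g' g'' :: "real \<Rightarrow> real"
  assumes m_ge_2: "m \<ge> 2" and R_pos: "R > 0"
    and h_deriv: "\<And>r. r \<ge> 0 \<Longrightarrow> (h has_real_derivative h' r) (at r within {0..})"
    and h'_deriv: "\<And>r. r \<ge> 0 \<Longrightarrow> (h' has_real_derivative h'' r) (at r within {0..})"
    and h'_nonneg: "\<And>r. r > 0 \<Longrightarrow> h' r \<ge> 0"
    and h''_nonneg: "\<And>r. r > 0 \<Longrightarrow> h'' r \<ge> 0"
    and g_deriv: "\<And>r. r \<in> {0..R} \<Longrightarrow> (g has_real_derivative g' r) (at r within {0..R})"
    and g'_deriv: "\<And>r. r \<in> {0<..<R} \<Longrightarrow> (g' has_real_derivative g'' r) (at r)"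
    and g_ode: "\<And>r. r \<in> {0<..<R} \<Longrightarrow>
       g'' r + ((real m - 1) / r + h' r) * g' r + (lam - (real m - 1) / r^2) * g r = 0"
    and g_0: "g 0 = 0"
    and g'_R: "g' R = - \<alpha> * g R"
begin

lemma m_minus_1: "real m - 1 \<ge> 1"
  using m_ge_2 by simp

lemma m_eq_Suc_Suc: obtains k where "m = Suc (Suc k)"
  using m_ge_2 by (metis add_2_eq_Suc le_Suc_ex)

lemma power_m_minus_1: "r ^ (m - 1) = r * r ^ (m - 2)"
  by (rule m_eq_Suc_Suc) simp

lemma h_has_derivative_at: "r > 0 \<Longrightarrow> (h has_real_derivative h' r) (at r)"
  using h_deriv[of r] at_within_interior[of r "{0..}"] by simp

lemma h'_has_derivative_at: "r > 0 \<Longrightarrow> (h' has_real_derivative h'' r) (at r)"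
  using h'_deriv[of r] at_within_interior[of r "{0..}"] by simp

lemma continuous_on_h: "continuous_on {0..} h"
  unfolding continuous_on_eq_continuous_within using h_deriv by (auto intro: DERIV_continuous)

lemma continuous_on_h': "continuous_on {0..} h'"
  unfolding continuous_on_eq_continuous_within using h'_deriv by (auto intro: DERIV_continuous)

lemma h_mono: assumes "0 \<le> x" "x \<le> y" shows "h x \<le> h y"
proof (rule DERIV_nonneg_imp_increasing_open[OF assms(2)])
  show "\<exists>d. (h has_real_derivative d) (at z) \<and> 0 \<le> d" if "x < z" "z < y" for z
    using h_has_derivative_at[of z] h'_nonneg[of z] that assms by auto
  show "continuous_on {x..y} h" by (rule continuous_on_subset[OF continuous_on_h]) (use assms in auto)
qed

lemma h'_mono: assumes "0 \<le> x" "x \<le> y" shows "h' x \<le> h' y"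
proof (rule DERIV_nonneg_imp_increasing_open[OF assms(2)])
  show "\<exists>d. (h' has_real_derivative d) (at z) \<and> 0 \<le> d" if "x < z" "z < y" for z
    using h'_has_derivative_at[of z] h''_nonneg[of z] that assms by auto
  show "continuous_on {x..y} h'" by (rule continuous_on_subset[OF continuous_on_h']) (use assms in auto)
qed

lemma g_has_derivative_at: "r \<in> {0<..<R} \<Longrightarrow> (g has_real_derivative g' r) (at r)"
  using g_deriv[of r] by (simp add: at_within_Icc_at)

lemma continuous_on_g: "continuous_on {0..R} g"
  unfolding continuous_on_eq_continuous_within using g_deriv DERIV_continuous by blast

lemma gext_has_derivative:
  assumes r: "r \<ge> 0"
  shows "(gext g R \<alpha> has_real_derivative gext' g g' R \<alpha> r) (at r within {0..})"
proof -
  define E where "E = (\<lambda>x. g R * exp (- \<alpha> * (x - R)))"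
  have E_deriv: "(E has_real_derivative (- \<alpha> * g R * exp (- \<alpha> * (x - R)))) (at x)" for x
    unfolding E_def by (auto intro!: derivative_eq_intros)
  consider "r < R" | "r = R" | "r > R" by linarith
  then show ?thesis
  proof cases
    case 1
    have "at r within {0..R} = at r within {0..}"
      by (rule at_within_nhd[of _ "{..<R}"]) (use 1 in auto)
    then have "(g has_real_derivative g' r) (at r within {0..})" using g_deriv[of r] r 1 by simp
    then have "(gext g R \<alpha> has_real_derivative g' r) (at r within {0..})"
      by (rule has_field_derivative_transform_within[where d="R - r"])
        (use 1 r in \<open>auto simp: gext_def dist_real_def\<close>)
    then show ?thesis using 1 by (simp add: gext'_def)
  next
    case 3
    have "(gext g R \<alpha> has_real_derivative (- \<alpha> * g R * exp (- \<alpha> * (r - R)))) (at r)"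
      by (rule has_field_derivative_transform_within_open[OF E_deriv, where S="{R<..}"])
        (use 3 in \<open>auto simp: gext_def E_def\<close>)
    then show ?thesis using 3 by (auto simp: gext'_def intro: has_field_derivative_at_within)
  next
    case 2
    have left: "(gext g R \<alpha> has_real_derivative g' R) (at R within {0..R})"
      by (rule has_field_derivative_transform_within[OF g_deriv[of R], where d=1])
        (use R_pos in \<open>auto simp: gext_def\<close>)
    have "(E has_real_derivative g' R) (at R within {R..})"
      using has_field_derivative_at_within[OF E_deriv[of R]] g'_R by simp
    then have right: "(gext g R \<alpha> has_real_derivative g' R) (at R within {R..})"
      by (rule has_field_derivative_transform_within[where d=1]) (auto simp: gext_def E_def)
    have "(gext g R \<alpha> has_real_derivative g' R) (at R within ({0..R} \<union> {R..}))"
      using left right by (simp add: has_field_derivative_iff Lim_within_Un)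
    moreover have "{0..R} \<union> {R..} = {0::real..}" using R_pos by auto
    ultimately show ?thesis using 2 by (simp add: gext'_def)
  qed
qed

lemma gext_0: "gext g R \<alpha> 0 = 0"
  using R_pos g_0 by (simp add: gext_def)

lemma chord_slope_gext: "r \<le> R \<Longrightarrow> chord_slope (gext g R \<alpha>) (gext' g g' R \<alpha>) r = chord_slope g g' r"
  using R_pos by (simp add: chord_slope_def gext_def gext'_def)

lemma continuous_on_chord_slope_g: "continuous_on {0..R} (chord_slope g g')"
proof (rule continuous_on_eq)
  show "continuous_on {0..R} (chord_slope (gext g R \<alpha>) (gext' g g' R \<alpha>))"
    by (rule continuous_on_subset[OF continuous_on_chord_slope[OF gext_has_derivative gext_0]]) auto
qed (simp add: chord_slope_gext)

definition weight :: "real \<Rightarrow> real" where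
  "weight r = r ^ (m - 1) * exp (h r)"

lemma weight_pos: "r > 0 \<Longrightarrow> weight r > 0"
  by (simp add: weight_def)

lemma weight_0: "weight 0 = 0"
  unfolding weight_def power_m_minus_1 by simp

lemma weight_has_derivative:
  assumes r: "r > 0"
  shows "(weight has_real_derivative exp (h r) * r ^ (m - 2) * ((real m - 1) + r * h' r)) (at r)"
proof -
  obtain k where k: "m = Suc (Suc k)" by (rule m_eq_Suc_Suc)
  have "(weight has_real_derivative
      real (m - 1) * r ^ (m - 1 - Suc 0) * exp (h r) + exp (h r) * h' r * r ^ (m - 1)) (at r)"
    unfolding weight_def[abs_def] using r by (intro DERIV_mult DERIV_pow DERIV_fun_exp h_has_derivative_at)
  moreover have "real (m - 1) * r ^ (m - 1 - Suc 0) * exp (h r) + exp (h r) * h' r * r ^ (m - 1)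
      = exp (h r) * r ^ (m - 2) * ((real m - 1) + r * h' r)"
    unfolding k by (simp add: algebra_simps)
  ultimately show ?thesis by simp
qed

lemma continuous_on_weight: "continuous_on {0..R} weight"
  unfolding weight_def using continuous_on_subset[OF continuous_on_h, of "{0..R}"]
  by (auto intro!: continuous_intros)

definition flux :: "real \<Rightarrow> real" where
  "flux r = weight r * g' r"

definition flux_source :: "real \<Rightarrow> real" where
  "flux_source r = exp (h r) * r ^ (m - 2) * ((real m - 1) - lam * r^2) * chord_slope g g' r"

lemma flux_has_derivative:
  assumes r: "r \<in> {0<..<R}"
  shows "(flux has_real_derivative flux_source r) (at r)"
proof -
  obtain k where k: "m = Suc (Suc k)" by (rule m_eq_Suc_Suc)
  have "(flux has_real_derivative
      exp (h r) * r ^ (m - 2) * ((real m - 1) + r * h' r) * g' r + g'' r * weight r) (at r)"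
    unfolding flux_def[abs_def] using r by (intro DERIV_mult weight_has_derivative g'_deriv) auto
  moreover have "g'' r = - ((real m - 1) / r + h' r) * g' r - (lam - (real m - 1) / r^2) * g r"
    using g_ode[OF r] by (simp add: algebra_simps)
  moreover have "exp (h r) * r ^ (m - 2) * ((real m - 1) + r * h' r) * g' r
      + (- ((real m - 1) / r + h' r) * g' r - (lam - (real m - 1) / r^2) * g r) * weight r = flux_source r"
    using r unfolding weight_def flux_source_def unfolding k
    by (simp add: chord_slope_def field_simps power2_eq_square)
  ultimately show ?thesis by simp
qed

lemma continuous_on_flux_source: "continuous_on {0..R} flux_source"
  unfolding flux_source_def
  using continuous_on_subset[OF continuous_on_h, of "{0..R}"] continuous_on_chord_slope_g
  by (auto intro!: continuous_intros)

lemma flux_source_integrable: "{a..b} \<subseteq> {0..R} \<Longrightarrow> flux_source integrable_on {a..b}"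
  by (rule integrable_continuous_interval, rule continuous_on_subset[OF continuous_on_flux_source])

lemma flux_diff_eq_integral:
  assumes st: "0 < s" "s \<le> t" "t < R"
  shows "flux t - flux s = integral {s..t} flux_source"
proof -
  have "(flux_source has_integral (flux t - flux s)) {s..t}"
  proof (rule fundamental_theorem_of_calculus_interior[OF st(2)])
    show "continuous_on {s..t} flux"
      by (intro continuous_at_imp_continuous_on ballI DERIV_isCont[OF flux_has_derivative]) (use st in auto)
    show "(flux has_vector_derivative flux_source x) (at x)" if "x \<in> {s<..<t}" for x
      using flux_has_derivative[of x] that st by (simp add: has_real_derivative_iff_has_vector_derivative)
  qed
  then show ?thesis by (simp add: integral_unique)
qed

lemma g'_eq_chord_slope:
  assumes t: "t \<in> {0<..<R}"
  obtains z where "0 < z" "z < t" "g' z = chord_slope g g' t"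
proof -
  have "\<exists>l z. 0 < z \<and> z < t \<and> (g has_real_derivative l) (at z) \<and> g t - g 0 = (t - 0) * l"
  proof (rule MVT)
    show "continuous_on {0..t} g" by (rule continuous_on_subset[OF continuous_on_g]) (use t in auto)
    show "g differentiable (at x)" if "0 < x" "x < t" for x
      using g_has_derivative_at[of x] that t unfolding real_differentiable_def by auto
  qed (use t in auto)
  then obtain l z where z: "0 < z" "z < t" "(g has_real_derivative l) (at z)" "g t - g 0 = (t - 0) * l"
    by blast
  have "l = g' z" using DERIV_unique[OF z(3) g_has_derivative_at] z t by auto
  then show ?thesis using that z t g_0 by (simp add: chord_slope_def field_simps)
qed

text \<open>\<open>g'\<close> is not known to be bounded near \<open>0\<close>; the mean value theorem supplies points where it
  equals a chord slope, which is bounded.\<close>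
lemma flux_small_near_0:
  obtains K where "K \<ge> 0" "\<And>t. t \<in> {0<..<min R 1} \<Longrightarrow> \<exists>z. 0 < z \<and> z < t \<and> \<bar>flux z\<bar> \<le> t * K"
proof -
  obtain B where B: "\<And>x. x \<in> {0..R} \<Longrightarrow> \<bar>chord_slope g g' x\<bar> \<le> B"
    using compact_continuous_image[OF continuous_on_chord_slope_g compact_Icc] compact_imp_bounded
    by (metis bounded_real imageI)
  have small: "\<exists>z. 0 < z \<and> z < t \<and> \<bar>flux z\<bar> \<le> t * (exp (h R) * \<bar>B\<bar>)"
    if t: "t \<in> {0<..<min R 1}" for t
  proof -
    obtain z where z: "0 < z" "z < t" "g' z = chord_slope g g' t"
      using g'_eq_chord_slope[of t] t by auto
    have "z ^ (m - 1) = z * z ^ (m - 2)" by (rule power_m_minus_1)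
    also have "\<dots> \<le> t * 1" using z t by (intro mult_mono power_le_one) auto
    finally have "z ^ (m - 1) \<le> t" by simp
    moreover have "exp (h z) \<le> exp (h R)" using h_mono[of z R] z t by auto
    moreover have "\<bar>g' z\<bar> \<le> \<bar>B\<bar>" using z B[of t] t by auto
    ultimately have "z ^ (m - 1) * exp (h z) * \<bar>g' z\<bar> \<le> t * exp (h R) * \<bar>B\<bar>"
      by (intro mult_mono) (use z in auto)
    then have "\<bar>flux z\<bar> \<le> t * (exp (h R) * \<bar>B\<bar>)"
      using z by (simp add: flux_def weight_def abs_mult mult.assoc)
    with z show ?thesis by blast
  qed
  show thesis by (rule that[of "exp (h R) * \<bar>B\<bar>"]) (use small in auto)
qed

lemma flux_eq_integral:
  assumes r: "r \<in> {0<..<R}"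
  shows "flux r = integral {0..r} flux_source"
proof -
  define L where "L = flux r - integral {0..r} flux_source"
  have L_eq: "L = flux z - integral {0..z} flux_source" if "0 < z" "z \<le> r" for z
  proof -
    have "integral {0..z} flux_source + integral {z..r} flux_source = integral {0..r} flux_source"
      by (rule Henstock_Kurzweil_Integration.integral_combine) (use that r flux_source_integrable in auto)
    then show ?thesis using flux_diff_eq_integral[of z r] that r by (simp add: L_def)
  qed
  obtain K where K: "K \<ge> 0" "\<And>t. t \<in> {0<..<min R 1} \<Longrightarrow> \<exists>z. 0 < z \<and> z < t \<and> \<bar>flux z\<bar> \<le> t * K"
    using flux_small_near_0 by blast
  obtain C where C: "\<And>x. x \<in> {0..R} \<Longrightarrow> \<bar>flux_source x\<bar> \<le> C"
    using compact_continuous_image[OF continuous_on_flux_source compact_Icc] compact_imp_bounded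
    by (metis bounded_real imageI)
  have "\<bar>L\<bar> \<le> t * (K + \<bar>C\<bar>)" if t: "t \<in> {0<..<min r 1}" for t
  proof -
    obtain z where z: "0 < z" "z < t" "\<bar>flux z\<bar> \<le> t * K"
      using K(2)[of t] t r by auto
    have "norm (integral {0..z} flux_source) \<le> integral {0..z} (\<lambda>_. \<bar>C\<bar>)"
      by (rule integral_norm_bound_integral) (use C z t r flux_source_integrable in force)+
    moreover have "z * \<bar>C\<bar> \<le> t * \<bar>C\<bar>" using z by (simp add: mult_right_mono)
    ultimately have "\<bar>integral {0..z} flux_source\<bar> \<le> t * \<bar>C\<bar>"
      using z by simp
    then show ?thesis using L_eq[of z] z t by (simp add: algebra_simps)
  qed
  then have "eventually (\<lambda>t. \<bar>L\<bar> \<le> t * (K + \<bar>C\<bar>)) (at_right 0)"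
    using eventually_at_right_real[of 0 "min r 1"] r by (auto elim: eventually_mono)
  moreover have "((\<lambda>t. t * (K + \<bar>C\<bar>)) \<longlongrightarrow> 0 * (K + \<bar>C\<bar>)) (at_right 0)" by (intro tendsto_intros)
  ultimately have "\<bar>L\<bar> \<le> 0 * (K + \<bar>C\<bar>)"
    using tendsto_le[OF trivial_limit_at_right_real _ tendsto_const] by blast
  then show ?thesis by (simp add: L_def)
qed

lemma g'_eq_flux_quotient: "r \<in> {0<..<R} \<Longrightarrow> g' r = integral {0..r} flux_source / weight r"
  using flux_eq_integral[of r] weight_pos[of r] by (simp add: flux_def field_simps)

lemma g'_tendsto_at_left_R: "(g' \<longlongrightarrow> g' R) (at_left R)"
proof -
  define D where "D = (\<lambda>x. integral {0..x} flux_source / weight x)"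
  have "weight x \<noteq> 0" if "x \<in> {R/2..R}" for x
    using weight_pos[of x] that R_pos by auto
  then have D_cont: "continuous_on {R/2..R} D"
    unfolding D_def using R_pos
    by (intro continuous_on_divide continuous_on_subset[OF continuous_on_weight]
        continuous_on_subset[OF indefinite_integral_continuous_1[OF flux_source_integrable]]) auto
  have g_eq: "g x = g (R/2) + integral {R/2..x} D" if x: "x \<in> {R/2..R}" for x
  proof -
    have "(D has_integral (g x - g (R/2))) {R/2..x}"
    proof (rule fundamental_theorem_of_calculus_interior)
      show "continuous_on {R/2..x} g" by (rule continuous_on_subset[OF continuous_on_g]) (use x R_pos in auto)
      show "(g has_vector_derivative D y) (at y)" if "y \<in> {R/2<..<x}" for y
        using g_has_derivative_at[of y] g'_eq_flux_quotient[of y] that x R_pos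
        by (simp add: D_def has_real_derivative_iff_has_vector_derivative)
    qed (use x in auto)
    then show ?thesis by (simp add: integral_unique)
  qed
  have "((\<lambda>x. g (R/2) + integral {R/2..x} D) has_real_derivative (0 + D R)) (at R within {R/2..R})"
    by (intro DERIV_add DERIV_const integral_has_real_derivative D_cont) (use R_pos in auto)
  then have "((\<lambda>x. g (R/2) + integral {R/2..x} D) has_real_derivative D R) (at R within {R/2..R})"
    by simp
  then have "(g has_real_derivative D R) (at R within {R/2..R})"
  proof (rule has_field_derivative_transform_within[where d=1])
    show "g (R/2) + integral {R/2..x} D = g x" if "x \<in> {R/2..R}" "dist x R < 1" for x
      using g_eq[OF that(1)] by simp
  qed (use R_pos in auto)
  moreover have "(g has_real_derivative g' R) (at R within {R/2..R})"
    by (rule has_field_derivative_subset[OF g_deriv]) (use R_pos in auto)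
  moreover have "\<not> trivial_limit (at R within {R/2..R})"
    using R_pos by (simp add: at_within_Icc_at_left)
  ultimately have "g' R = D R"
    by (metis vector_derivative_unique_within has_real_derivative_iff_has_vector_derivative)
  moreover have "(D \<longlongrightarrow> D R) (at_left R)"
    using continuous_on_Icc_at_leftD[OF D_cont] R_pos by simp
  moreover have "eventually (\<lambda>x. D x = g' x) (at_left R)"
    using eventually_at_left_real[OF R_pos] by eventually_elim (simp add: D_def g'_eq_flux_quotient)
  ultimately show ?thesis by (auto intro: Lim_transform_eventually)
qed

lemma g'_tendsto_at_right_0: "(g' \<longlongrightarrow> g' 0) (at_right 0)"
proof -
  define Q where "Q = (\<lambda>x. integral {0..x} flux_source)"
  define W' where "W' = (\<lambda>x. exp (h x) * x ^ (m - 2) * ((real m - 1) + x * h' x))"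
  define q where "q = (\<lambda>x. ((real m - 1) - lam * x^2) * chord_slope g g' x / ((real m - 1) + x * h' x))"
  have near_0: "eventually (\<lambda>x. x \<in> {0<..<R}) (at_right 0)"
    using eventually_at_right_real[OF R_pos] .
  have "(q \<longlongrightarrow> ((real m - 1) - lam * 0^2) * chord_slope g g' 0 / ((real m - 1) + 0 * h' 0)) (at_right 0)"
    unfolding q_def using m_minus_1 R_pos
      continuous_on_Icc_at_rightD[OF continuous_on_chord_slope_g R_pos]
      continuous_on_Icc_at_rightD[OF continuous_on_subset[OF continuous_on_h'] R_pos]
    by (intro tendsto_intros) auto
  moreover have "((real m - 1) - lam * 0^2) * chord_slope g g' 0 / ((real m - 1) + 0 * h' 0) = g' 0"
    using m_minus_1 by (simp add: chord_slope_def)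
  moreover have "eventually (\<lambda>x. q x = flux_source x / W' x) (at_right 0)"
    using near_0 by eventually_elim (simp add: q_def flux_source_def W'_def)
  ultimately have ratio_lim: "((\<lambda>x. flux_source x / W' x) \<longlongrightarrow> g' 0) (at_right 0)"
    by (auto intro: Lim_transform_eventually)
  have "((\<lambda>x. Q x / weight x) \<longlongrightarrow> g' 0) (at_right 0)"
  proof (rule lhopital_right_0[OF _ _ _ _ _ _ ratio_lim])
    show "(Q \<longlongrightarrow> 0) (at_right 0)"
      using continuous_on_Icc_at_rightD[OF indefinite_integral_continuous_1[OF flux_source_integrable] R_pos]
      by (simp add: Q_def)
    show "(weight \<longlongrightarrow> 0) (at_right 0)"
      using continuous_on_Icc_at_rightD[OF continuous_on_weight R_pos] by (simp add: weight_0)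
    show "eventually (\<lambda>x. weight x \<noteq> 0) (at_right 0)"
      using near_0 by eventually_elim (simp add: weight_def)
    show "eventually (\<lambda>x. W' x \<noteq> 0) (at_right 0)"
      using near_0
    proof eventually_elim
      case (elim x)
      then have "0 \<le> x * h' x" using h'_nonneg[of x] by auto
      with elim m_minus_1 show ?case by (simp add: W'_def)
    qed
    show "eventually (\<lambda>x. (Q has_real_derivative flux_source x) (at x)) (at_right 0)"
      using near_0
    proof eventually_elim
      case (elim x)
      have "(Q has_real_derivative flux_source x) (at x within {0..R})"
        unfolding Q_def by (rule integral_has_real_derivative[OF continuous_on_flux_source]) (use elim in auto)
      then show ?case using elim by (simp add: at_within_Icc_at)
    qed
    show "eventually (\<lambda>x. (weight has_real_derivative W' x) (at x)) (at_right 0)"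
      using near_0 by eventually_elim (simp add: W'_def weight_has_derivative)
  qed
  moreover have "eventually (\<lambda>x. Q x / weight x = g' x) (at_right 0)"
    using near_0 by eventually_elim (simp add: Q_def g'_eq_flux_quotient)
  ultimately show ?thesis by (rule Lim_transform_eventually)
qed

lemma continuous_on_g': "continuous_on {0..R} g'"
proof (rule continuous_on_IccI[OF g'_tendsto_at_right_0 g'_tendsto_at_left_R _ R_pos])
  show "(g' \<longlongrightarrow> g' x) (at x)" if "0 < x" "x < R" for x
    using DERIV_isCont[OF g'_deriv[of x]] that by (simp add: isCont_def)
qed

lemma continuous_on_gext': "continuous_on {0..} (gext' g g' R \<alpha>)"
proof -
  have "continuous_on ({0..R} \<union> {R..}) (gext' g g' R \<alpha>)"
  proof (rule continuous_on_closed_Un)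
    show "continuous_on {0..R} (gext' g g' R \<alpha>)"
      by (rule continuous_on_eq[OF continuous_on_g']) (simp add: gext'_def)
    have "continuous_on {R..} (\<lambda>x. - \<alpha> * g R * exp (- \<alpha> * (x - R)))"
      by (intro continuous_intros)
    then show "continuous_on {R..} (gext' g g' R \<alpha>)"
      by (rule continuous_on_eq) (auto simp: gext'_def g'_R)
  qed auto
  moreover have "{0..R} \<union> {R..} = {0::real..}" using R_pos by auto
  ultimately show ?thesis by simp
qed

lemma energy_identity:
  "integral {0..R} (\<lambda>r. ((g' r)^2 + (real m - 1) * (chord_slope g g' r)^2) * exp (h r) * r ^ (m - 1))
     = - \<alpha> * R ^ (m - 1) * exp (h R) * (g R)^2 + lam * integral {0..R} (\<lambda>r. (g r)^2 * exp (h r) * r ^ (m - 1))"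
proof -
  define E where "E = (\<lambda>r. ((g' r)^2 + (real m - 1) * (chord_slope g g' r)^2) * exp (h r) * r ^ (m - 1))"
  define M where "M = (\<lambda>r. (g r)^2 * exp (h r) * r ^ (m - 1))"
  have h_cont: "continuous_on {0..R} h" by (rule continuous_on_subset[OF continuous_on_h]) auto
  have FTC: "((\<lambda>r. E r - lam * M r) has_integral (g R * flux R - g 0 * flux 0)) {0..R}"
  proof (rule fundamental_theorem_of_calculus_interior)
    show "continuous_on {0..R} (\<lambda>r. g r * flux r)"
      unfolding flux_def weight_def using continuous_on_g continuous_on_g' h_cont
      by (intro continuous_intros)
    show "((\<lambda>r. g r * flux r) has_vector_derivative E x - lam * M x) (at x)" if x: "x \<in> {0<..<R}" for x
    proof -
      obtain k where k: "m = Suc (Suc k)" by (rule m_eq_Suc_Suc)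
      have "((\<lambda>r. g r * flux r) has_real_derivative g' x * flux x + flux_source x * g x) (at x)"
        by (rule DERIV_mult[OF g_has_derivative_at[OF x] flux_has_derivative[OF x]])
      moreover have "g' x * flux x + flux_source x * g x = E x - lam * M x"
        using x unfolding flux_def weight_def flux_source_def E_def M_def unfolding k
        by (simp add: chord_slope_def field_simps power2_eq_square)
      ultimately show ?thesis by (simp add: has_real_derivative_iff_has_vector_derivative)
    qed
  qed (use R_pos in auto)
  have boundary: "g R * flux R - g 0 * flux 0 = - \<alpha> * R ^ (m - 1) * exp (h R) * (g R)^2"
    using g_0 g'_R by (simp add: flux_def weight_def power2_eq_square)
  have "E integrable_on {0..R}" "M integrable_on {0..R}"
    unfolding E_def M_def using continuous_on_g continuous_on_g' continuous_on_chord_slope_g h_cont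
    by (auto intro!: integrable_continuous_interval continuous_intros)
  then have "integral {0..R} (\<lambda>r. E r - lam * M r) = integral {0..R} E - lam * integral {0..R} M"
    using integral_diff[OF _ integrable_on_cmult_left[of M _ lam]] by simp
  then have "integral {0..R} E = - \<alpha> * R ^ (m - 1) * exp (h R) * (g R)^2 + lam * integral {0..R} M"
    using integral_unique[OF FTC] boundary by linarith
  then show ?thesis unfolding E_def M_def .
qed

lemma integral_weighted_g_sq_pos:
  assumes "\<exists>r\<in>{0..R}. g r \<noteq> 0"
  shows "integral {0..R} (\<lambda>r. (g r)^2 * exp (h r) * r ^ (m - 1)) > 0"
proof -
  define f where "f = (\<lambda>r. (g r)^2 * exp (h r) * r ^ (m - 1))"
  have f_cont: "continuous_on {0..R} f"
    unfolding f_def using continuous_on_g continuous_on_subset[OF continuous_on_h, of "{0..R}"]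
    by (auto intro!: continuous_intros)
  have f_nonneg: "0 \<le> f x" if "x \<in> {0..R}" for x using that by (simp add: f_def)
  obtain r0 where r0: "r0 \<in> {0..R}" "g r0 \<noteq> 0" using assms by blast
  then have "f r0 > 0" using g_0 by (cases "r0 = 0") (auto simp: f_def)
  then have "integral {0..R} f \<noteq> 0"
    using has_integral_0_cbox_imp_0[of 0 R f r0] f_cont f_nonneg r0 R_pos
      integrable_integral[OF integrable_continuous_interval[OF f_cont]]
    by (auto simp: box_real)
  moreover have "0 \<le> integral {0..R} f"
    by (rule integral_nonneg[OF integrable_continuous_interval[OF f_cont] f_nonneg])
  ultimately show ?thesis by (simp add: f_def)
qed

lemma lam_nonneg:
  assumes m: "m = DIM('a::euclidean_space)" and \<alpha>: "- steklov_sigma1 h R TYPE('a) \<le> \<alpha>"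
    and g_nonzero: "\<exists>r\<in>{0..R}. g r \<noteq> 0"
  shows "lam \<ge> 0"
proof -
  have "- \<alpha> * R ^ (m - 1) * (gext g R \<alpha> R)^2 * exp (h R)
     \<le> integral {0..R} (\<lambda>r. ((gext' g g' R \<alpha> r)^2 + (real m - 1) *
         (chord_slope (gext g R \<alpha>) (gext' g g' R \<alpha>) r)^2) * exp (h r) * r ^ (m - 1))"
    unfolding m
    by (rule steklov_radial_bound[OF gext_has_derivative gext_0 continuous_on_gext'
          continuous_on_subset[OF continuous_on_h] R_pos \<alpha>[unfolded m]]) auto
  also have "\<dots> = integral {0..R}
      (\<lambda>r. ((g' r)^2 + (real m - 1) * (chord_slope g g' r)^2) * exp (h r) * r ^ (m - 1))"
    by (rule integral_cong) (simp add: chord_slope_gext gext'_def)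
  also have "\<dots> = - \<alpha> * R ^ (m - 1) * exp (h R) * (g R)^2
      + lam * integral {0..R} (\<lambda>r. (g r)^2 * exp (h r) * r ^ (m - 1))"
    by (rule energy_identity)
  finally have "0 \<le> lam * integral {0..R} (\<lambda>r. (g r)^2 * exp (h r) * r ^ (m - 1))"
    by (simp add: gext_def)
  then show ?thesis
    using integral_weighted_g_sq_pos[OF g_nonzero] by (simp add: zero_le_mult_iff)
qed

lemma minus_alpha_mult_R_le_1:
  assumes m: "m = DIM('a::euclidean_space)" and \<alpha>: "- steklov_sigma1 h R TYPE('a) \<le> \<alpha>"
  shows "- \<alpha> * R \<le> 1"
proof -
  have id_deriv: "(id has_real_derivative 1) (at r within {0..})" for r :: real
    unfolding id_def by (rule DERIV_ident)
  have "- \<alpha> * R ^ (m - 1) * (id R)^2 * exp (h R)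
     \<le> integral {0..R} (\<lambda>r. (1^2 + (real m - 1) * (chord_slope id (\<lambda>_. 1) r)^2) * exp (h r) * r ^ (m - 1))"
    unfolding m
    by (rule steklov_radial_bound[OF id_deriv _ _ continuous_on_subset[OF continuous_on_h] R_pos \<alpha>[unfolded m]])
      auto
  also have "\<dots> = integral {0..R} (\<lambda>r. real m * (exp (h r) * r ^ (m - 1)))"
    by (rule integral_cong) (simp add: chord_slope_def)
  also have "\<dots> \<le> integral {0..R} (\<lambda>r. real m * (exp (h R) * r ^ (m - 1)))"
  proof (rule integral_le)
    show "(\<lambda>r. real m * (exp (h r) * r ^ (m - 1))) integrable_on {0..R}"
      using continuous_on_subset[OF continuous_on_h, of "{0..R}"]
      by (auto intro!: integrable_continuous_interval continuous_intros)
    show "real m * (exp (h r) * r ^ (m - 1)) \<le> real m * (exp (h R) * r ^ (m - 1))" if "r \<in> {0..R}" for r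
      using h_mono[of r R] that by (intro mult_left_mono mult_right_mono) auto
  qed (intro integrable_continuous_interval continuous_intros)
  also have "\<dots> = exp (h R) * R ^ m"
  proof -
    have "((\<lambda>r. r ^ (m - 1)) has_integral (R ^ m / real m - 0 ^ m / real m)) {0..R}"
      using R_pos m_ge_2
      by (intro fundamental_theorem_of_calculus)
        (auto intro!: derivative_eq_intros simp: has_real_derivative_iff_has_vector_derivative[symmetric])
    then have "integral {0..R} (\<lambda>r. r ^ (m - 1)) = R ^ m / real m"
      using m_ge_2 by (simp add: integral_unique power_0_left)
    then show ?thesis using m_ge_2 by simp
  qed
  finally have "- \<alpha> * R ^ (m - 1) * R^2 * exp (h R) \<le> exp (h R) * R ^ m" by simp
  moreover have "R ^ (m - 1) * R^2 = R ^ m * R"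
    by (rule m_eq_Suc_Suc) (simp add: power2_eq_square)
  ultimately have "(exp (h R) * R ^ m) * (- \<alpha> * R) \<le> (exp (h R) * R ^ m) * 1"
    by (simp add: algebra_simps)
  moreover have "exp (h R) * R ^ m > 0" using R_pos by simp
  ultimately show ?thesis by (simp only: mult_le_cancel_left_pos)
qed

definition robin_flux :: "real \<Rightarrow> real" where
  "robin_flux r = exp (- \<alpha> * r) * weight r * (g' r + \<alpha> * g r)"

definition robin_potential :: "real \<Rightarrow> real" where
  "robin_potential r = (real m - 1) / r^2 + \<alpha> * (real m - 1) / r + \<alpha> * h' r - \<alpha>^2 - lam"

lemma robin_potential_antimono:
  assumes \<alpha>: "\<alpha> \<le> 0" "- \<alpha> * R \<le> 1" and xy: "0 < x" "x \<le> y" "y \<le> R"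
  shows "robin_potential y \<le> robin_potential x"
proof -
  have "- \<alpha> \<le> 1 / R" "1 / R \<le> 1 / x" "1 / y \<le> 1 / x" "0 < 1 / y"
    using \<alpha> xy R_pos by (simp_all add: field_simps frac_le)
  then have "0 \<le> 1 / x - 1 / y" "0 \<le> 1 / x + 1 / y + \<alpha>" by linarith+
  then have "0 \<le> (real m - 1) * (1 / x - 1 / y) * (1 / x + 1 / y + \<alpha>)"
    using m_minus_1 by simp
  also have "\<dots> = ((real m - 1) / x^2 + \<alpha> * (real m - 1) / x) - ((real m - 1) / y^2 + \<alpha> * (real m - 1) / y)"
    using xy by (simp add: field_simps power2_eq_square)
  finally show ?thesis
    using h'_mono[of x y] xy \<alpha> mult_left_mono_neg[of "h' x" "h' y" \<alpha>]
    by (simp add: robin_potential_def)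
qed

lemma robin_flux_has_derivative:
  assumes x: "x \<in> {0<..<R}"
  shows "(robin_flux has_real_derivative exp (- \<alpha> * x) * weight x * g x * robin_potential x) (at x)"
proof -
  obtain k where k: "m = Suc (Suc k)" by (rule m_eq_Suc_Suc)
  have "robin_flux = (\<lambda>x. exp (- \<alpha> * x) * (flux x + \<alpha> * (weight x * g x)))"
    by (simp add: fun_eq_iff robin_flux_def flux_def algebra_simps)
  moreover have "((\<lambda>x. exp (- \<alpha> * x) * (flux x + \<alpha> * (weight x * g x))) has_real_derivative
      exp (- \<alpha> * x) * (- \<alpha>) * (flux x + \<alpha> * (weight x * g x))
      + (flux_source x + \<alpha> * (exp (h x) * x ^ (m - 2) * ((real m - 1) + x * h' x) * g x + g' x * weight x))
        * exp (- \<alpha> * x)) (at x)"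
    using x by (intro DERIV_mult DERIV_add DERIV_cmult DERIV_fun_exp DERIV_cmult_Id
        flux_has_derivative weight_has_derivative g_has_derivative_at) auto
  moreover have "exp (- \<alpha> * x) * (- \<alpha>) * (flux x + \<alpha> * (weight x * g x))
      + (flux_source x + \<alpha> * (exp (h x) * x ^ (m - 2) * ((real m - 1) + x * h' x) * g x + g' x * weight x))
        * exp (- \<alpha> * x)
      = exp (- \<alpha> * x) * weight x * g x * robin_potential x"
    using x unfolding flux_def weight_def flux_source_def robin_potential_def unfolding k
    by (simp add: chord_slope_def field_simps power2_eq_square)
  ultimately show ?thesis by simp
qed

text \<open>As \<open>robin_potential\<close> decreases, the sign of the derivative of \<open>robin_flux\<close> changes at most
  once, from \<open>+\<close> to \<open>-\<close>; since \<open>robin_flux\<close> vanishes at \<open>0\<close> and (by the Robin condition) at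
  \<open>R\<close>, it is nonnegative in between.\<close>
lemma g'_plus_alpha_g_nonneg:
  assumes \<alpha>: "\<alpha> \<le> 0" "- \<alpha> * R \<le> 1" and r: "r \<in> {0<..<R}"
    and g_nonneg: "\<And>r. r \<in> {0..R} \<Longrightarrow> g r \<ge> 0"
  shows "g' r + \<alpha> * g r \<ge> 0"
proof -
  have W_cont: "continuous_on {0..R} robin_flux"
    unfolding robin_flux_def weight_def
    using continuous_on_g continuous_on_g' continuous_on_subset[OF continuous_on_h, of "{0..R}"]
    by (auto intro!: continuous_intros)
  have factor_pos: "exp (- \<alpha> * x) * weight x > 0" if "x > 0" for x
    using weight_pos[OF that] by simp
  have "robin_flux r \<ge> 0"
  proof (cases "robin_potential r \<ge> 0")
    case True
    have "robin_flux 0 \<le> robin_flux r"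
    proof (rule DERIV_nonneg_imp_increasing_open[of 0 r])
      fix x assume x: "0 < x" "x < r"
      then have "robin_potential x \<ge> 0"
        using True robin_potential_antimono[OF \<alpha>, of x r] r by auto
      then show "\<exists>y. (robin_flux has_real_derivative y) (at x) \<and> 0 \<le> y"
        using robin_flux_has_derivative[of x] factor_pos[of x] g_nonneg[of x] x r by force
    qed (use r in \<open>auto intro: continuous_on_subset[OF W_cont]\<close>)
    then show ?thesis by (simp add: robin_flux_def weight_0)
  next
    case False
    have "robin_flux R \<le> robin_flux r"
    proof (rule DERIV_nonpos_imp_decreasing_open[of r R])
      fix x assume x: "r < x" "x < R"
      then have "robin_potential x \<le> 0"
        using False robin_potential_antimono[OF \<alpha>, of r x] r by auto
      then show "\<exists>y. (robin_flux has_real_derivative y) (at x) \<and> y \<le> 0"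
        using robin_flux_has_derivative[of x] factor_pos[of x] g_nonneg[of x] x r
        by (force intro: mult_nonneg_nonpos)
    qed (use r in \<open>auto intro: continuous_on_subset[OF W_cont]\<close>)
    then show ?thesis by (simp add: robin_flux_def g'_R)
  qed
  then show ?thesis using factor_pos[of r] r by (simp add: robin_flux_def zero_le_mult_iff)
qed

lemma energy_has_derivative:
  assumes z: "z \<in> {0<..<R}"
  shows "(radial_energy m \<alpha> h' g g' has_real_derivative
      - 2 * ((real m - 1) / z * (g' z - g z / z)^2) - 2 * ((h' z - \<alpha>) * (g' z)^2)
      - 2 * (lam * (g z * (g' z + \<alpha> * g z)))
      + \<alpha> * (real m - 1) * (g z)^2 / z^2 + \<alpha> * h'' z * (g z)^2) (at z)"
proof -
  have z0: "z > 0" using z by auto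
  have ode: "g'' z = - ((real m - 1) / z + h' z) * g' z - (lam - (real m - 1) / z^2) * g z"
    using g_ode[OF z] by (simp add: algebra_simps)
  show ?thesis
    unfolding radial_energy_def[abs_def] using z0
    by (auto intro!: derivative_eq_intros g_has_derivative_at[OF z] g'_deriv[OF z] h'_has_derivative_at
        simp: ode field_simps power2_eq_square)
qed

lemma energy_antimono_interior:
  assumes lam: "lam \<ge> 0" and \<alpha>: "\<alpha> \<le> 0" "- \<alpha> * R \<le> 1"
    and g_nonneg: "\<And>r. r \<in> {0..R} \<Longrightarrow> g r \<ge> 0"
    and xy: "0 < x" "x \<le> y" "y \<le> R"
  shows "radial_energy m \<alpha> h' g g' y \<le> radial_energy m \<alpha> h' g g' x"
proof (rule DERIV_nonpos_imp_decreasing_open[OF xy(2)])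
  show "continuous_on {x..y} (radial_energy m \<alpha> h' g g')"
    unfolding radial_energy_def[abs_def] using xy
      continuous_on_subset[OF continuous_on_g, of "{x..y}"] continuous_on_subset[OF continuous_on_g', of "{x..y}"]
      continuous_on_subset[OF continuous_on_h', of "{x..y}"]
    by (auto intro!: continuous_intros)
  fix t assume t: "x < t" "t < y"
  then have tR: "t \<in> {0<..<R}" using xy by auto
  have "0 \<le> (real m - 1) / t * (g' t - g t / t)^2" using m_minus_1 tR by simp
  moreover have "0 \<le> (h' t - \<alpha>) * (g' t)^2" using h'_nonneg[of t] \<alpha> tR by simp
  moreover have "0 \<le> lam * (g t * (g' t + \<alpha> * g t))"
    using lam g_nonneg[of t] g'_plus_alpha_g_nonneg[OF \<alpha> tR g_nonneg] tR by simp
  moreover have "\<alpha> * (real m - 1) * (g t)^2 / t^2 \<le> 0"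
    using \<alpha> m_minus_1 by (intro divide_nonpos_nonneg mult_nonpos_nonneg) auto
  moreover have "\<alpha> * h'' t * (g t)^2 \<le> 0"
    using \<alpha> h''_nonneg[of t] tR by (simp add: mult_nonpos_nonneg)
  ultimately show "\<exists>d. (radial_energy m \<alpha> h' g g' has_real_derivative d) (at t) \<and> d \<le> 0"
    using energy_has_derivative[OF tR] by (intro exI conjI) (assumption, linarith)
qed

lemma energy_gext_exterior:
  assumes r: "R \<le> r"
  shows "radial_energy m \<alpha> h' (gext g R \<alpha>) (gext' g g' R \<alpha>) r = (g R)^2 * exp (2 * \<alpha> * R) *
    (exp (- 2 * \<alpha> * r) * ((real m - 1) / r^2 + \<alpha> * (real m - 1) / r + \<alpha> * h' r - \<alpha>^2))"
proof -
  define E where "E = g R * exp (- \<alpha> * (r - R))"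
  have "gext g R \<alpha> r = E" "gext' g g' R \<alpha> r = - \<alpha> * E"
    using r g'_R by (auto simp: gext_def gext'_def E_def)
  moreover have "exp (- \<alpha> * (r - R)) * exp (- \<alpha> * (r - R)) = exp (2 * \<alpha> * R) * exp (- 2 * \<alpha> * r)"
    unfolding mult_exp_exp by (simp add: algebra_simps)
  then have "E^2 = (g R)^2 * exp (2 * \<alpha> * R) * exp (- 2 * \<alpha> * r)"
    by (simp add: E_def power2_eq_square)
  ultimately show ?thesis
    by (simp add: radial_energy_def power2_eq_square algebra_simps)
qed

lemma energy_antimono_exterior:
  assumes \<alpha>: "\<alpha> \<le> 0" and xy: "R \<le> x" "x \<le> y"
  shows "radial_energy m \<alpha> h' (gext g R \<alpha>) (gext' g g' R \<alpha>) y
           \<le> radial_energy m \<alpha> h' (gext g R \<alpha>) (gext' g g' R \<alpha>) x"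
  unfolding energy_gext_exterior[OF xy(1)] energy_gext_exterior[OF order.trans[OF xy]]
  using R_pos xy m_ge_2
  by (intro mult_left_mono exp_weighted_potential_antimono[OF _ \<alpha> h'_has_derivative_at h'_nonneg h''_nonneg])
    (auto simp: m_minus_1)

lemma energy_gext_antimono:
  assumes lam: "lam \<ge> 0" and \<alpha>: "\<alpha> \<le> 0" "- \<alpha> * R \<le> 1"
    and g_nonneg: "\<And>r. r \<in> {0..R} \<Longrightarrow> g r \<ge> 0"
    and xy: "0 < x" "x \<le> y"
  shows "radial_energy m \<alpha> h' (gext g R \<alpha>) (gext' g g' R \<alpha>) y
           \<le> radial_energy m \<alpha> h' (gext g R \<alpha>) (gext' g g' R \<alpha>) x"
proof -
  let ?F = "radial_energy m \<alpha> h' (gext g R \<alpha>) (gext' g g' R \<alpha>)"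
  have interior: "?F t \<le> ?F s" if "0 < s" "s \<le> t" "t \<le> R" for s t
    using energy_antimono_interior[OF lam \<alpha> g_nonneg that] that
    by (simp add: radial_energy_def gext_def gext'_def)
  have exterior: "?F t \<le> ?F s" if "R \<le> s" "s \<le> t" for s t
    by (rule energy_antimono_exterior[OF \<alpha>(1) that])
  consider "y \<le> R" | "R \<le> x" | "x < R" "R < y" by linarith
  then show ?thesis
  proof cases
    case 3
    then show ?thesis using interior[of x R] exterior[of R y] xy by linarith
  qed (use interior exterior xy in blast)+
qed

end

theorem lemma3p1:
  fixes R \<alpha> :: real and h h' h'' g g' g'' :: "real \<Rightarrow> real"
    and F :: "real \<Rightarrow> real"
  assumes dim: "DIM('a::euclidean_space) \<ge> 2"
    and R: "R > 0"
    and h_d1: "\<And>r. r \<ge> 0 \<Longrightarrow> (h has_real_derivative h' r) (at r within {0..})"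
    and h_d2: "\<And>r. r \<ge> 0 \<Longrightarrow> (h' has_real_derivative h'' r) (at r within {0..})"
    and h_C2: "continuous_on {0..} h''"
    and h'_nonneg: "\<And>r. r > 0 \<Longrightarrow> h' r \<ge> 0"
    and h''_nonneg: "\<And>r. r > 0 \<Longrightarrow> h'' r \<ge> 0"
    and \<alpha>: "- steklov_sigma1 h R TYPE('a) \<le> \<alpha>" "\<alpha> \<le> 0"
    and g_d1: "\<And>r. r \<in> {0..R} \<Longrightarrow> (g has_real_derivative g' r) (at r within {0..R})"
    and g_d2: "\<And>r. r \<in> {0<..<R} \<Longrightarrow> (g' has_real_derivative g'' r) (at r)"
    and g_nonneg: "\<And>r. r \<in> {0..R} \<Longrightarrow> g r \<ge> 0"
    and g_nonzero: "\<exists>r\<in>{0..R}. g r \<noteq> 0"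
    and g_ode: "\<And>r. r \<in> {0<..<R} \<Longrightarrow>
       g'' r + ((real DIM('a) - 1) / r + h' r) * g' r
         + (robin_lambda2 h R \<alpha> TYPE('a) - (real DIM('a) - 1) / r^2) * g r = 0"
    and g0: "g 0 = 0"
    and gR: "g' R = - \<alpha> * g R"
    and F_def: "\<And>r. F r = (gext' g g' R \<alpha> r)^2 + (real DIM('a) - 1) / r^2 * (gext g R \<alpha> r)^2
       + 2 * \<alpha> * gext g R \<alpha> r * gext' g g' R \<alpha> r
       + \<alpha> * ((real DIM('a) - 1) / r + h' r) * (gext g R \<alpha> r)^2"
  shows "\<forall>r s. 0 < r \<and> r \<le> s \<longrightarrow> F s \<le> F r"
proof -
  interpret radial_robin_profile "DIM('a)" R \<alpha> "robin_lambda2 h R \<alpha> TYPE('a)" h h' h'' g g' g''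
    using dim R h_d1 h_d2 h'_nonneg h''_nonneg g_d1 g_d2 g_ode g0 gR by unfold_locales
  have "robin_lambda2 h R \<alpha> TYPE('a) \<ge> 0"
    by (rule lam_nonneg[OF refl \<alpha>(1) g_nonzero])
  moreover have "- \<alpha> * R \<le> 1"
    by (rule minus_alpha_mult_R_le_1[OF refl \<alpha>(1)])
  moreover have "F = radial_energy DIM('a) \<alpha> h' (gext g R \<alpha>) (gext' g g' R \<alpha>)"
    by (simp add: fun_eq_iff F_def radial_energy_def)
  ultimately show ?thesis
    using energy_gext_antimono[OF _ \<alpha>(2) _ g_nonneg] by blast
qed

end
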